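(* Let $P$ be a compact PL space and $(W,f)\in\widetilde\Psi_d(\mathbb{R}^N)(P)$ with $Z(W)=\varnothing$. Then there is a concordance $(\widehat W,\widehat f)$ from $(W,f)$ to the trivial element $(\varnothing,\infty)$. Moreover, $\widehat W$ can be chosen so that, for every $x\in P$ with $W_x=\varnothing$, $\widehat W$ is empty over $[0,1]\times\{x\}$.
   Context: PL spaces and maps are as usual. A PL map $\pi:E\to B$ is a PL submersion of codimension $d$ if every $e\in E$ has an open neighbourhood $V$ of $\pi(e)$ and an open PL embedding $h:V\times\mathbb{R}^d\to\pi^{-1}(V)$ with $h(\pi(e),\mathbf{0})=e$ and $\pi h$ the projection. $\Psi_d(\mathbb{R}^N)(P)$ is the set of closed PL subspaces $W\subseteq P\times\mathbb{R}^N$ whose projection to $P$ is a PL submersion of codimension $d$; $W_x$ is the fibre over $x$, and pullback is $g^*W=\{(q,y):(g(q),y)\in W\}$. The zero-set $Z(W)$ is $\{x:\mathbf{0}\in W_x\}$. A marking function for $W$ is a continuous $f:P\to\mathbb{R}^N\cup\{\infty\}$ with: $f(x)=\infty$ iff $W_x=\varnothing$; $f(x)\in W_x$ if $W_x\neq\varnothing$; $f(x)=\mathbf{0}$ if $\mathbf{0}\in W_x$; and $f$ PL on $f^{-1}(\mathbb{R}^N)$. $\widetilde\Psi_d(\mathbb{R}^N)(P)$ is the set of pairs $(W,f)$, with pullback $(g^*W,f\circ g)$. The trivial element $(\varnothing,\infty)$ has empty $W$ and constant marking function $\infty$. A concordance from $a_0$ to $a_1$ is an element of $\widetilde\Psi_d(\mathbb{R}^N)([0,1]\times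 P)$ whose pullback along $x\mapsto(j,x)$ equals $a_j$ for $j=0,1$. *)

theory Defs
  imports "HOL-Analysis.Analysis"
begin

text \<open>PL spaces are modelled as (locally finite) polyhedra in a Euclidean space:
  a set is a polyhedron if near each of its points it agrees with a finite
  union of polytopes (convex hulls of finite sets).\<close>

definition locally_polyhedral :: "'a::euclidean_space set \<Rightarrow> bool" where
  "locally_polyhedral S \<longleftrightarrow>
     (\<forall>a\<in>S. \<exists>U F. open U \<and> a \<in> U \<and> finite F \<and> (\<forall>T\<in>F. polytope T) \<and>
                  U \<inter> S = U \<inter> \<Union>F)"

definition pl_map :: "'a::euclidean_space set \<Rightarrow> ('a \<Rightarrow> 'b::euclidean_space) \<Rightarrow> bool" where
  "pl_map S f \<longleftrightarrow> locally_polyhedral S \<and> continuous_on S f \<and>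
                    locally_polyhedral ((\<lambda>x. (x, f x)) ` S)"

text \<open>PL submersion of codimension d, pi : E \<rightarrow> B.  The model space R^d is
  represented by a d-dimensional linear subspace L of the Euclidean type 'c.\<close>

definition pl_submersion ::
  "nat \<Rightarrow> 'c::euclidean_space itself \<Rightarrow> ('e::euclidean_space \<Rightarrow> 'b::euclidean_space)
     \<Rightarrow> 'e set \<Rightarrow> 'b set \<Rightarrow> bool" where
  "pl_submersion d (_::'c itself) \<pi> E B \<longleftrightarrow>
     pl_map E \<pi> \<and> locally_polyhedral B \<and> \<pi> ` E \<subseteq> B \<and>
     (\<forall>e\<in>E. \<exists>V (L::'c set) (h::'b \<times> 'c \<Rightarrow> 'e) g.
        openin (top_of_set B) V \<and> \<pi> e \<in> V \<and>
        subspace L \<and> dim L = d \<and>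
        pl_map (V \<times> L) h \<and>
        h ` (V \<times> L) \<subseteq> E \<inter> \<pi> -` V \<and>
        openin (top_of_set (E \<inter> \<pi> -` V)) (h ` (V \<times> L)) \<and>
        homeomorphism (V \<times> L) (h ` (V \<times> L)) h g \<and>
        h (\<pi> e, 0) = e \<and>
        (\<forall>z\<in>V \<times> L. \<pi> (h z) = fst z))"

definition fibre :: "('p \<times> 'v) set \<Rightarrow> 'p \<Rightarrow> 'v set" where
  "fibre W x = {y. (x, y) \<in> W}"

definition Psi :: "nat \<Rightarrow> 'p::euclidean_space set \<Rightarrow> ('p \<times> 'v::euclidean_space) set \<Rightarrow> bool" where
  "Psi d P W \<longleftrightarrow>
     W \<subseteq> P \<times> UNIV \<and> closedin (top_of_set (P \<times> (UNIV::'v set))) W \<and>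
     locally_polyhedral W \<and> pl_submersion d TYPE('v) fst W P"

definition zero_set :: "'p set \<Rightarrow> ('p \<times> 'v::zero) set \<Rightarrow> 'p set" where
  "zero_set P W = {x\<in>P. 0 \<in> fibre W x}"

text \<open>R^N \<union> {\<infinity>} is modelled as 'v option (None = \<infinity>), with the topology of the
  one-point compactification.\<close>

definition ocopen :: "'v::euclidean_space option set \<Rightarrow> bool" where
  "ocopen U \<longleftrightarrow> open (Some -` U) \<and> (None \<in> U \<longrightarrow> compact (UNIV - Some -` U))"

definition oc_continuous_on :: "'p::topological_space set \<Rightarrow> ('p \<Rightarrow> 'v::euclidean_space option) \<Rightarrow> bool" where
  "oc_continuous_on P f \<longleftrightarrow>
     (\<forall>x\<in>P. \<forall>U. ocopen U \<and> f x \<in> U \<longrightarrow>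
        (\<exists>V. openin (top_of_set P) V \<and> x \<in> V \<and> f ` V \<subseteq> U))"

definition marking :: "'p::euclidean_space set \<Rightarrow> ('p \<times> 'v::euclidean_space) set \<Rightarrow> ('p \<Rightarrow> 'v option) \<Rightarrow> bool" where
  "marking P W f \<longleftrightarrow>
     oc_continuous_on P f \<and>
     (\<forall>x\<in>P. f x = None \<longleftrightarrow> fibre W x = {}) \<and>
     (\<forall>x\<in>P. fibre W x \<noteq> {} \<longrightarrow> (\<exists>v. f x = Some v \<and> v \<in> fibre W x)) \<and>
     (\<forall>x\<in>P. 0 \<in> fibre W x \<longrightarrow> f x = Some 0) \<and>
     pl_map {x\<in>P. f x \<noteq> None} (\<lambda>x. the (f x))"

definition PsiT :: "nat \<Rightarrow> 'p::euclidean_space set \<Rightarrow> ('p \<times> 'v::euclidean_space) set \<Rightarrow> ('p \<Rightarrow> 'v option) \<Rightarrow> bool" where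
  "PsiT d P W f \<longleftrightarrow> Psi d P W \<and> marking P W f"

definition slice :: "((real \<times> 'p) \<times> 'v) set \<Rightarrow> real \<Rightarrow> ('p \<times> 'v) set" where
  "slice Wh t = {(x, y). ((t, x), y) \<in> Wh}"

definition concordance ::
  "nat \<Rightarrow> 'p::euclidean_space set \<Rightarrow> ((real \<times> 'p) \<times> 'v::euclidean_space) set \<Rightarrow> (real \<times> 'p \<Rightarrow> 'v option)
     \<Rightarrow> ('p \<times> 'v) set \<Rightarrow> ('p \<Rightarrow> 'v option) \<Rightarrow> ('p \<times> 'v) set \<Rightarrow> ('p \<Rightarrow> 'v option) \<Rightarrow> bool" where
  "concordance d P Wh fh W0 f0 W1 f1 \<longleftrightarrow>
     PsiT d ({0..1} \<times> P) Wh fh \<and>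
     slice Wh 0 = W0 \<and> (\<forall>x\<in>P. fh (0, x) = f0 x) \<and>
     slice Wh 1 = W1 \<and> (\<forall>x\<in>P. fh (1, x) = f1 x)"

end

theory Submission
  imports Defs
begin

text \<open>Since Z(W) is empty and P is compact, there is an e > 0 such that every point (x, y) of W has a
  coordinate with |y_b| \<ge> e.  Push every coordinate of R^N outwards by a PL isotopy psi_t,
  t \<in> [0, 1): psi_0 is the identity, psi_t fixes 0, and as t \<rightarrow> 1 every point with a coordinate of size
  at least e is pushed off to infinity.  The traces psi_t(W_x) over [0, 1) \<times> P, empty over t = 1,
  then form a closed family of PL submersions, that is a concordance from W to the empty family;
  the marking psi_t(f x) tends to infinity.  Where W_x is empty the trace stays empty.\<close>

section \<open>Polyhedra\<close>

lemma locally_polyhedral_locally: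
  assumes "\<And>a. a \<in> S \<Longrightarrow> \<exists>U T. open U \<and> a \<in> U \<and> locally_polyhedral T \<and> U \<inter> S = U \<inter> T"
  shows "locally_polyhedral S"
  unfolding locally_polyhedral_def
proof
  fix a assume a: "a \<in> S"
  obtain U T where U: "open U" "a \<in> U" "locally_polyhedral T" "U \<inter> S = U \<inter> T"
    using assms[OF a] by auto
  have "a \<in> T" using U(2,4) a by auto
  then obtain U' F where F: "open U'" "a \<in> U'" "finite F" "\<forall>T\<in>F. polytope T" "U' \<inter> T = U' \<inter> \<Union>F"
    using U(3) unfolding locally_polyhedral_def by auto
  have "(U \<inter> U') \<inter> S = (U \<inter> U') \<inter> \<Union>F" using U(4) F(5) by auto
  then show "\<exists>U F. open U \<and> a \<in> U \<and> finite F \<and> (\<forall>T\<in>F. polytope T) \<and> U \<inter> S = U \<inter> \<Union>F"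
    using U(1,2) F(1-4) by (intro exI[of _ "U \<inter> U'"] exI[of _ F]) auto
qed

lemma open_polytope_neighbourhood:
  fixes a :: "'a::euclidean_space"
  assumes "open U" "a \<in> U"
  obtains C Q where "polytope C" "open Q" "a \<in> Q" "Q \<subseteq> C" "C \<subseteq> U"
proof -
  obtain u v where "cbox u v \<subseteq> U" "a \<in> box u v"
    using open_contains_cbox[OF assms] by metis
  then show ?thesis using that[of "cbox u v" "box u v"]
    by (simp add: polytope_interval box_subset_cbox open_box)
qed

lemma locally_polyhedral_Union_polyhedra:
  fixes F :: "'a::euclidean_space set set"
  assumes "finite F" "\<And>T. T \<in> F \<Longrightarrow> polyhedron T"
  shows "locally_polyhedral (\<Union>F)"
  unfolding locally_polyhedral_def
proof
  fix a :: 'a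
  obtain C Q where C: "polytope C" "open Q" "a \<in> Q" "Q \<subseteq> C"
    using open_polytope_neighbourhood[of UNIV a] by auto
  have "Q \<inter> \<Union>F = Q \<inter> \<Union>((\<lambda>T. T \<inter> C) ` F)" using C(4) by auto
  moreover have "\<forall>T\<in>(\<lambda>T. T \<inter> C) ` F. polytope T" using C(1) assms(2) by (auto intro: polyhedron_Int_polytope)
  ultimately show "\<exists>U G. open U \<and> a \<in> U \<and> finite G \<and> (\<forall>T\<in>G. polytope T) \<and> U \<inter> \<Union>F = U \<inter> \<Union>G"
    using C(2,3) assms(1) by (intro exI[of _ Q] exI[of _ "(\<lambda>T. T \<inter> C) ` F"]) auto
qed

lemma locally_polyhedral_polyhedron:
  fixes S :: "'a::euclidean_space set"
  shows "polyhedron S \<Longrightarrow> locally_polyhedral S"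
  using locally_polyhedral_Union_polyhedra[of "{S}"] by auto

lemma locally_polyhedral_UNIV [iff]: "locally_polyhedral (UNIV::'a::euclidean_space set)"
  by (simp add: locally_polyhedral_polyhedron)

lemma locally_polyhedral_open:
  fixes S :: "'a::euclidean_space set"
  assumes "open S"
  shows "locally_polyhedral S"
  unfolding locally_polyhedral_def
proof
  fix a assume "a \<in> S"
  then obtain C Q where "polytope C" "open Q" "a \<in> Q" "Q \<subseteq> C" "C \<subseteq> S"
    using open_polytope_neighbourhood[OF assms] by metis
  then show "\<exists>U F. open U \<and> a \<in> U \<and> finite F \<and> (\<forall>T\<in>F. polytope T) \<and> U \<inter> S = U \<inter> \<Union>F"
    by (intro exI[of _ Q] exI[of _ "{C}"]) auto
qed

lemma locally_polyhedral_Int: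
  fixes S :: "'a::euclidean_space set"
  assumes "locally_polyhedral S" "locally_polyhedral T"
  shows "locally_polyhedral (S \<inter> T)"
  unfolding locally_polyhedral_def
proof
  fix a assume a: "a \<in> S \<inter> T"
  obtain U1 F1 where 1: "open U1" "a \<in> U1" "finite F1" "\<forall>T\<in>F1. polytope T" "U1 \<inter> S = U1 \<inter> \<Union>F1"
    using assms(1) a unfolding locally_polyhedral_def by auto
  obtain U2 F2 where 2: "open U2" "a \<in> U2" "finite F2" "\<forall>T\<in>F2. polytope T" "U2 \<inter> T = U2 \<inter> \<Union>F2"
    using assms(2) a unfolding locally_polyhedral_def by auto
  define F where "F = (\<lambda>(A, B). A \<inter> B) ` (F1 \<times> F2)"
  have "(U1 \<inter> U2) \<inter> (S \<inter> T) = (U1 \<inter> U2) \<inter> ((U1 \<inter> \<Union>F1) \<inter> (U2 \<inter> \<Union>F2))"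
    using 1(5) 2(5) by auto
  also have "\<dots> = (U1 \<inter> U2) \<inter> \<Union>F" unfolding F_def by auto
  finally have "(U1 \<inter> U2) \<inter> (S \<inter> T) = (U1 \<inter> U2) \<inter> \<Union>F" .
  moreover have "finite F" "\<forall>X\<in>F. polytope X"
    using 1(3,4) 2(3,4) unfolding F_def by (auto intro: polytope_Int)
  ultimately show "\<exists>U F. open U \<and> a \<in> U \<and> finite F \<and> (\<forall>T\<in>F. polytope T) \<and> U \<inter> (S \<inter> T) = U \<inter> \<Union>F"
    using 1(1,2) 2(1,2) by (intro exI[of _ "U1 \<inter> U2"] exI[of _ F]) auto
qed

lemma locally_polyhedral_Times:
  fixes S :: "'a::euclidean_space set" and T :: "'b::euclidean_space set"
  assumes "locally_polyhedral S" "locally_polyhedral T"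
  shows "locally_polyhedral (S \<times> T)"
  unfolding locally_polyhedral_def
proof
  fix a assume a: "a \<in> S \<times> T"
  obtain U1 F1 where 1: "open U1" "fst a \<in> U1" "finite F1" "\<forall>T\<in>F1. polytope T" "U1 \<inter> S = U1 \<inter> \<Union>F1"
    using assms(1) a unfolding locally_polyhedral_def by (metis mem_Times_iff)
  obtain U2 F2 where 2: "open U2" "snd a \<in> U2" "finite F2" "\<forall>T\<in>F2. polytope T" "U2 \<inter> T = U2 \<inter> \<Union>F2"
    using assms(2) a unfolding locally_polyhedral_def by (metis mem_Times_iff)
  define F where "F = (\<lambda>(A, B). A \<times> B) ` (F1 \<times> F2)"
  have "(U1 \<times> U2) \<inter> (S \<times> T) = (U1 \<inter> \<Union>F1) \<times> (U2 \<inter> \<Union>F2)"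
    using 1(5) 2(5) by auto
  also have "\<dots> = (U1 \<times> U2) \<inter> \<Union>F" unfolding F_def by auto
  finally have "(U1 \<times> U2) \<inter> (S \<times> T) = (U1 \<times> U2) \<inter> \<Union>F" .
  moreover have "finite F" "\<forall>X\<in>F. polytope X"
    using 1(3,4) 2(3,4) unfolding F_def by (auto intro: polytope_Times)
  moreover have "open (U1 \<times> U2)" "a \<in> U1 \<times> U2"
    using 1(1,2) 2(1,2) by (auto simp: open_Times mem_Times_iff)
  ultimately show "\<exists>U F. open U \<and> a \<in> U \<and> finite F \<and> (\<forall>T\<in>F. polytope T) \<and> U \<inter> (S \<times> T) = U \<inter> \<Union>F"
    by (intro exI[of _ "U1 \<times> U2"] exI[of _ F]) auto
qed

lemma locally_polyhedral_interval: "locally_polyhedral {0..1::real}"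
  using locally_polyhedral_polyhedron[OF polyhedron_interval[of "0::real" 1]] by (simp add: cbox_interval)

lemma locally_polyhedral_halfopen_interval: "locally_polyhedral {0..<1::real}"
proof -
  have "{0..<1::real} = {..<1} \<inter> {0..1}" by auto
  then show ?thesis
    by (simp add: locally_polyhedral_Int locally_polyhedral_open locally_polyhedral_interval)
qed

lemma locally_polyhedral_strip: "locally_polyhedral ({0..<1::real} \<times> (UNIV::'a::euclidean_space set))"
  by (simp add: locally_polyhedral_Times locally_polyhedral_halfopen_interval)

lemma locally_polyhedral_linear_image:
  fixes S :: "'a::euclidean_space set" and L :: "'a \<Rightarrow> 'b::euclidean_space"
  assumes "locally_polyhedral S" "linear L"
    and "continuous_on (L ` S) R" "\<And>s. s \<in> S \<Longrightarrow> R (L s) = s"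
  shows "locally_polyhedral (L ` S)"
  unfolding locally_polyhedral_def
proof
  fix b assume "b \<in> L ` S"
  then obtain a where a: "a \<in> S" "b = L a" by auto
  obtain U F where F: "open U" "a \<in> U" "finite F" "\<forall>T\<in>F. polytope T" "U \<inter> S = U \<inter> \<Union>F"
    using assms(1) a unfolding locally_polyhedral_def by auto
  obtain C Q where C: "polytope C" "open Q" "a \<in> Q" "Q \<subseteq> C" "C \<subseteq> U"
    using open_polytope_neighbourhood[OF F(1,2)] by metis
  \<comment> \<open>By continuity of R, near b the set L ` S only contains images of points of Q \<subseteq> C.\<close>
  obtain A where A: "open A" "A \<inter> L ` S = R -` Q \<inter> L ` S"
    using assms(3) C(2) unfolding continuous_on_open_invariant by auto
  have "b \<in> A" using A a C(3) assms(4) by auto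
  have "A \<inter> L ` S = A \<inter> \<Union>((\<lambda>T. L ` (C \<inter> T)) ` F)"
  proof
    show "A \<inter> L ` S \<subseteq> A \<inter> \<Union>((\<lambda>T. L ` (C \<inter> T)) ` F)"
    proof
      fix y assume y: "y \<in> A \<inter> L ` S"
      then obtain s where s: "s \<in> S" "y = L s" by auto
      have "s \<in> C" using A y s assms(4) C(4) by auto
      then have "s \<in> U \<inter> \<Union>F" using s F(5) C(5) by auto
      then show "y \<in> A \<inter> \<Union>((\<lambda>T. L ` (C \<inter> T)) ` F)" using y s \<open>s \<in> C\<close> by auto
    qed
    show "A \<inter> \<Union>((\<lambda>T. L ` (C \<inter> T)) ` F) \<subseteq> A \<inter> L ` S"
      using F(5) C(5) by blast
  qed
  moreover have "\<forall>X\<in>(\<lambda>T. L ` (C \<inter> T)) ` F. polytope X"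
    using F(4) C(1) assms(2) by (auto intro!: polytope_linear_image polytope_Int)
  ultimately show "\<exists>U F. open U \<and> b \<in> U \<and> finite F \<and> (\<forall>T\<in>F. polytope T) \<and> U \<inter> L ` S = U \<inter> \<Union>F"
    using A(1) \<open>b \<in> A\<close> F(3) by (intro exI[of _ A] exI[of _ "(\<lambda>T. L ` (C \<inter> T)) ` F"]) auto
qed

lemma locally_polyhedral_pad_right:
  fixes G :: "('a::euclidean_space \<times> 'b::euclidean_space) set"
  assumes "locally_polyhedral G"
  shows "locally_polyhedral {(x, y, z::'c::euclidean_space). (x, y) \<in> G}"
proof -
  have "{(x, y, z::'c). (x, y) \<in> G} = (\<lambda>((x, y), z). (x, y, z)) ` (G \<times> UNIV)"
    by force
  also have "locally_polyhedral \<dots>"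
    by (rule locally_polyhedral_linear_image[where R = "\<lambda>(x, y, z). ((x, y), z)"])
       (auto simp: case_prod_beta linear_iff intro!: continuous_intros locally_polyhedral_Times assms)
  finally show ?thesis .
qed

lemma locally_polyhedral_pad_middle:
  fixes G :: "('a::euclidean_space \<times> 'c::euclidean_space) set"
  assumes "locally_polyhedral G"
  shows "locally_polyhedral {(x, y::'b::euclidean_space, z). (x, z) \<in> G}"
proof -
  have "{(x, y::'b, z). (x, z) \<in> G} = (\<lambda>((x, z), y). (x, y, z)) ` (G \<times> UNIV)"
    by force
  also have "locally_polyhedral \<dots>"
    by (rule locally_polyhedral_linear_image[where R = "\<lambda>(x, y, z). ((x, z), y)"])
       (auto simp: case_prod_beta linear_iff intro!: continuous_intros locally_polyhedral_Times assms)
  finally show ?thesis .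
qed

section \<open>PL maps\<close>

lemma pl_mapI:
  assumes "locally_polyhedral D" "continuous_on D f" "locally_polyhedral ((\<lambda>x. (x, f x)) ` D)"
  shows "pl_map D f"
  using assms unfolding pl_map_def by blast

lemma pl_mapD:
  assumes "pl_map D f"
  shows "locally_polyhedral D" "continuous_on D f" "locally_polyhedral ((\<lambda>x. (x, f x)) ` D)"
  using assms unfolding pl_map_def by blast+

lemma pl_map_linear:
  fixes f :: "'a::euclidean_space \<Rightarrow> 'b::euclidean_space"
  assumes "locally_polyhedral D" "linear f"
  shows "pl_map D f"
proof (rule pl_mapI[OF assms(1)])
  show "continuous_on D f"
    using assms(2) by (simp add: linear_continuous_on linear_conv_bounded_linear)
  have "linear (\<lambda>x. (x, f x))" using assms(2) by (simp add: linear_iff)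
  then show "locally_polyhedral ((\<lambda>x. (x, f x)) ` D)"
    by (rule locally_polyhedral_linear_image[OF assms(1), where R = fst]) (auto intro: continuous_intros)
qed

lemma pl_map_const:
  fixes c :: "'b::euclidean_space"
  assumes "locally_polyhedral (D::'a::euclidean_space set)"
  shows "pl_map D (\<lambda>x. c)"
proof (rule pl_mapI[OF assms continuous_on_const])
  have "polyhedron {c}" by (simp add: polytope_imp_polyhedron polytope_sing)
  then have "locally_polyhedral (D \<times> {c})"
    by (intro locally_polyhedral_Times assms locally_polyhedral_polyhedron)
  moreover have "(\<lambda>x. (x, c)) ` D = D \<times> {c}" by auto
  ultimately show "locally_polyhedral ((\<lambda>x. (x, c)) ` D)" by simp
qed

lemma pl_map_subset:
  fixes f :: "'a::euclidean_space \<Rightarrow> 'b::euclidean_space"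
  assumes "pl_map D f" "locally_polyhedral E" "E \<subseteq> D"
  shows "pl_map E f"
proof (rule pl_mapI[OF assms(2)])
  show "continuous_on E f" using pl_mapD(2)[OF assms(1)] assms(3) by (rule continuous_on_subset)
  have "(\<lambda>x. (x, f x)) ` E = (\<lambda>x. (x, f x)) ` D \<inter> (E \<times> UNIV)" using assms(3) by auto
  then show "locally_polyhedral ((\<lambda>x. (x, f x)) ` E)"
    using pl_mapD(3)[OF assms(1)] assms(2) by (simp add: locally_polyhedral_Int locally_polyhedral_Times)
qed

lemma pl_map_cong:
  assumes "pl_map D f" "D = E" "\<And>x. x \<in> D \<Longrightarrow> f x = g x"
  shows "pl_map E g"
proof -
  have "(\<lambda>x. (x, f x)) ` D = (\<lambda>x. (x, g x)) ` D" using assms(3) by auto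
  then show ?thesis using assms continuous_on_cong unfolding pl_map_def by metis
qed

lemma pl_map_Pair:
  fixes f :: "'a::euclidean_space \<Rightarrow> 'b::euclidean_space" and g :: "'a \<Rightarrow> 'c::euclidean_space"
  assumes "pl_map D f" "pl_map D g"
  shows "pl_map D (\<lambda>x. (f x, g x))"
proof (rule pl_mapI)
  show "locally_polyhedral D" "continuous_on D (\<lambda>x. (f x, g x))"
    using pl_mapD[OF assms(1)] pl_mapD[OF assms(2)] by (auto intro: continuous_intros)
  have "(\<lambda>x. (x, f x, g x)) ` D =
      {(x, y, z). (x, y) \<in> (\<lambda>x. (x, f x)) ` D} \<inter> {(x, y, z). (x, z) \<in> (\<lambda>x. (x, g x)) ` D}"
    by auto
  then show "locally_polyhedral ((\<lambda>x. (x, f x, g x)) ` D)"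
    using pl_mapD(3)[OF assms(1)] pl_mapD(3)[OF assms(2)]
    by (simp add: locally_polyhedral_Int locally_polyhedral_pad_right locally_polyhedral_pad_middle)
qed

lemma pl_map_compose:
  fixes f :: "'a::euclidean_space \<Rightarrow> 'b::euclidean_space" and g :: "'b \<Rightarrow> 'c::euclidean_space"
  assumes f: "pl_map D f" and g: "pl_map E g" and "f ` D \<subseteq> E"
  shows "pl_map D (\<lambda>x. g (f x))"
proof (rule pl_mapI)
  show "locally_polyhedral D" using pl_mapD(1)[OF f] .
  show "continuous_on D (\<lambda>x. g (f x))"
    using pl_mapD(2)[OF g] pl_mapD(2)[OF f] assms(3) by (rule continuous_on_compose2)
  \<comment> \<open>The graph of g \<circ> f is a linear projection of the set of triples (x, f x, g (f x)),
     and f provides a continuous inverse of that projection.\<close>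
  define S where "S = {(x, y, z). (x, y) \<in> (\<lambda>x. (x, f x)) ` D} \<inter> (UNIV \<times> (\<lambda>y. (y, g y)) ` E)"
  have "locally_polyhedral S"
    unfolding S_def using pl_mapD(3)[OF f] pl_mapD(3)[OF g]
    by (simp add: locally_polyhedral_Int locally_polyhedral_Times locally_polyhedral_pad_right)
  then have "locally_polyhedral ((\<lambda>(x, y, z). (x, z)) ` S)"
  proof (rule locally_polyhedral_linear_image[where R = "\<lambda>(x, z). (x, f x, z)"])
    have "fst ` (\<lambda>(x, y, z). (x, z)) ` S \<subseteq> D" unfolding S_def by auto
    then show "continuous_on ((\<lambda>(x, y, z). (x, z)) ` S) (\<lambda>(x, z). (x, f x, z))"
      unfolding case_prod_beta
      by (intro continuous_intros continuous_on_compose2[OF pl_mapD(2)[OF f]]) auto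
  qed (auto simp: S_def linear_iff)
  moreover have "(\<lambda>x. (x, g (f x))) ` D = (\<lambda>(x, y, z). (x, z)) ` S"
  proof
    show "(\<lambda>x. (x, g (f x))) ` D \<subseteq> (\<lambda>(x, y, z). (x, z)) ` S"
    proof
      fix p assume "p \<in> (\<lambda>x. (x, g (f x))) ` D"
      then obtain x where "x \<in> D" "p = (x, g (f x))" by auto
      then have "(x, f x, g (f x)) \<in> S" "p = (\<lambda>(x, y, z). (x, z)) (x, f x, g (f x))"
        using assms(3) unfolding S_def by auto
      then show "p \<in> (\<lambda>(x, y, z). (x, z)) ` S" by (rule rev_image_eqI)
    qed
  qed (auto simp: S_def)
  ultimately show "locally_polyhedral ((\<lambda>x. (x, g (f x))) ` D)" by simp
qed

lemma pl_map_linear_compose: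
  fixes f :: "'a::euclidean_space \<Rightarrow> 'b::euclidean_space" and L :: "'b \<Rightarrow> 'c::euclidean_space"
  assumes "pl_map D f" "linear L"
  shows "pl_map D (\<lambda>x. L (f x))"
  by (rule pl_map_compose[OF assms(1) pl_map_linear[OF locally_polyhedral_UNIV assms(2)]]) auto

lemma pl_map_local:
  fixes f :: "'a::euclidean_space \<Rightarrow> 'b::euclidean_space"
  assumes D: "locally_polyhedral D"
    and local: "\<And>a. a \<in> D \<Longrightarrow> \<exists>U E g. open U \<and> a \<in> U \<and> pl_map E g \<and> D \<inter> U \<subseteq> E \<and>
                                        (\<forall>x\<in>D \<inter> U. f x = g x)"
  shows "pl_map D f"
proof (rule pl_mapI[OF D])
  show "continuous_on D f"
    unfolding continuous_on_eq_continuous_within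
  proof
    fix a assume a: "a \<in> D"
    obtain U E g where U: "open U" "a \<in> U" "pl_map E g" "D \<inter> U \<subseteq> E" "\<forall>x\<in>D \<inter> U. f x = g x"
      using local[OF a] by metis
    have "continuous_on (D \<inter> U) f"
      using continuous_on_subset[OF pl_mapD(2)[OF U(3)] U(4)] U(5) by (metis continuous_on_cong)
    then have "continuous (at a within D \<inter> U) f"
      using a U(2) by (simp add: continuous_on_eq_continuous_within)
    moreover have "at a within D = at a within D \<inter> U"
      by (rule at_within_nhd[OF U(2,1)]) auto
    ultimately show "continuous (at a within D) f" by simp
  qed
  show "locally_polyhedral ((\<lambda>x. (x, f x)) ` D)"
  proof (rule locally_polyhedral_locally)
    fix q assume "q \<in> (\<lambda>x. (x, f x)) ` D"
    then obtain a where a: "a \<in> D" "q = (a, f a)" by auto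
    obtain U E g where U: "open U" "a \<in> U" "pl_map E g" "D \<inter> U \<subseteq> E" "\<forall>x\<in>D \<inter> U. f x = g x"
      using local[OF a(1)] by metis
    have "locally_polyhedral ((\<lambda>x. (x, g x)) ` E \<inter> (D \<times> UNIV))"
      using pl_mapD(3)[OF U(3)] D by (simp add: locally_polyhedral_Int locally_polyhedral_Times)
    moreover have "(U \<times> UNIV) \<inter> (\<lambda>x. (x, f x)) ` D = (\<lambda>x. (x, g x)) ` (D \<inter> U)"
      using U(5) by auto
    moreover have "(U \<times> UNIV) \<inter> ((\<lambda>x. (x, g x)) ` E \<inter> (D \<times> UNIV)) = (\<lambda>x. (x, g x)) ` (D \<inter> U)"
      using U(4) by auto
    moreover have "open (U \<times> UNIV)" "q \<in> U \<times> UNIV" using U(1,2) a(2) by (auto simp: open_Times)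
    ultimately show "\<exists>U T. open U \<and> q \<in> U \<and> locally_polyhedral T \<and> U \<inter> (\<lambda>x. (x, f x)) ` D = U \<inter> T"
      by (intro exI[of _ "U \<times> UNIV"] exI[of _ "(\<lambda>x. (x, g x)) ` E \<inter> (D \<times> UNIV)"]) auto
  qed
qed

lemma pl_map_max_pair: "pl_map UNIV (\<lambda>p::real \<times> real. max (fst p) (snd p))"
proof (rule pl_mapI[OF locally_polyhedral_UNIV])
  show "continuous_on UNIV (\<lambda>p::real \<times> real. max (fst p) (snd p))" by (intro continuous_intros)
  \<comment> \<open>H1 = {z = x, y \<le> x} and H2 = {z = y, x \<le> y}, for points ((x, y), z).\<close>
  define H1 where "H1 = {p::(real \<times> real) \<times> real. ((-1, 0), 1) \<bullet> p = 0} \<inter> {p. ((-1, 1), 0) \<bullet> p \<le> 0}"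
  define H2 where "H2 = {p::(real \<times> real) \<times> real. ((0, -1), 1) \<bullet> p = 0} \<inter> {p. ((1, -1), 0) \<bullet> p \<le> 0}"
  have "polyhedron H1" "polyhedron H2"
    unfolding H1_def H2_def by (intro polyhedron_Int polyhedron_hyperplane polyhedron_halfspace_le)+
  moreover have "(\<lambda>x::real \<times> real. (x, max (fst x) (snd x))) ` UNIV = H1 \<union> H2"
    unfolding H1_def H2_def by (auto simp: inner_prod_def image_iff max_def split: if_splits)
  ultimately show "locally_polyhedral ((\<lambda>x::real \<times> real. (x, max (fst x) (snd x))) ` UNIV)"
    using locally_polyhedral_Union_polyhedra[of "{H1, H2}"] by auto
qed

lemma pl_map_max:
  fixes f g :: "'a::euclidean_space \<Rightarrow> real"
  assumes "pl_map D f" "pl_map D g"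
  shows "pl_map D (\<lambda>x. max (f x) (g x))"
  using pl_map_compose[OF pl_map_Pair[OF assms] pl_map_max_pair] by simp

lemma pl_map_uminus:
  fixes f :: "'a::euclidean_space \<Rightarrow> 'b::euclidean_space"
  shows "pl_map D f \<Longrightarrow> pl_map D (\<lambda>x. - f x)"
  using pl_map_linear_compose[of D f uminus] by (simp add: linear_iff)

lemma pl_map_min:
  fixes f g :: "'a::euclidean_space \<Rightarrow> real"
  assumes "pl_map D f" "pl_map D g"
  shows "pl_map D (\<lambda>x. min (f x) (g x))"
proof -
  have "pl_map D (\<lambda>x. - max (- f x) (- g x))"
    by (intro pl_map_uminus pl_map_max assms)
  then show ?thesis by (rule pl_map_cong) (auto simp: max_def min_def)
qed

lemma pl_map_add:
  fixes f g :: "'a::euclidean_space \<Rightarrow> 'b::euclidean_space"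
  assumes "pl_map D f" "pl_map D g"
  shows "pl_map D (\<lambda>x. f x + g x)"
  using pl_map_linear_compose[OF pl_map_Pair[OF assms], of "\<lambda>p. fst p + snd p"]
  by (simp add: linear_iff algebra_simps)

lemma pl_map_diff:
  fixes f g :: "'a::euclidean_space \<Rightarrow> 'b::euclidean_space"
  assumes "pl_map D f" "pl_map D g"
  shows "pl_map D (\<lambda>x. f x - g x)"
  using pl_map_add[OF assms(1) pl_map_uminus[OF assms(2)]] by simp

lemma pl_map_affine: "pl_map UNIV (\<lambda>p::real \<times> real. a * fst p + b * snd p + c)"
  by (intro pl_map_add pl_map_const pl_map_linear locally_polyhedral_UNIV)
     (simp add: linear_iff algebra_simps)

lemma pl_map_sum:
  fixes f :: "'i \<Rightarrow> 'a::euclidean_space \<Rightarrow> 'b::euclidean_space"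
  assumes "finite I" "locally_polyhedral D" "\<And>i. i \<in> I \<Longrightarrow> pl_map D (f i)"
  shows "pl_map D (\<lambda>x. \<Sum>i\<in>I. f i x)"
  using assms
proof (induction I rule: finite_induct)
  case empty
  then show ?case using pl_map_const[OF assms(2), of 0] by simp
next
  case (insert i I)
  then show ?case using pl_map_add[of D "f i" "\<lambda>x. \<Sum>i\<in>I. f i x"] by simp
qed

lemma pl_map_coordinatewise:
  fixes F :: "'a::euclidean_space \<Rightarrow> real \<Rightarrow> real"
  assumes T: "locally_polyhedral T" and F: "pl_map (T \<times> UNIV) (\<lambda>p. F (fst p) (snd p))"
  shows "pl_map (T \<times> (UNIV::'v::euclidean_space set)) (\<lambda>p. \<Sum>b\<in>Basis. F (fst p) (snd p \<bullet> b) *\<^sub>R b)"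
proof (rule pl_map_sum[OF finite_Basis])
  show TV: "locally_polyhedral (T \<times> (UNIV::'v set))" by (simp add: T locally_polyhedral_Times)
  fix b :: 'v assume "b \<in> Basis"
  have "pl_map (T \<times> (UNIV::'v set)) (\<lambda>p. (fst p, snd p \<bullet> b))"
    by (rule pl_map_linear[OF TV]) (simp add: linear_iff inner_add_left)
  then have "pl_map (T \<times> (UNIV::'v set)) (\<lambda>p. F (fst (fst p, snd p \<bullet> b)) (snd (fst p, snd p \<bullet> b)))"
    by (rule pl_map_compose[OF _ F]) auto
  from pl_map_linear_compose[OF this, of "\<lambda>x. x *\<^sub>R b"]
  show "pl_map (T \<times> (UNIV::'v set)) (\<lambda>p. F (fst p) (snd p \<bullet> b) *\<^sub>R b)"
    by (simp add: linear_iff scaleR_add_left)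
qed

lemma locally_polyhedral_pl_vimage:
  fixes G :: "'a::euclidean_space \<Rightarrow> 'b::euclidean_space"
  assumes G: "pl_map D G" and "locally_polyhedral A"
  shows "locally_polyhedral {q\<in>D. G q \<in> A}"
proof -
  have "locally_polyhedral ((\<lambda>x. (x, G x)) ` D \<inter> (UNIV \<times> A))"
    using pl_mapD(3)[OF G] assms(2) by (simp add: locally_polyhedral_Int locally_polyhedral_Times)
  then have "locally_polyhedral (fst ` ((\<lambda>x. (x, G x)) ` D \<inter> (UNIV \<times> A)))"
  proof (rule locally_polyhedral_linear_image[OF _ linear_fst, where R = "\<lambda>q. (q, G q)"])
    have "fst ` ((\<lambda>x. (x, G x)) ` D \<inter> (UNIV \<times> A)) \<subseteq> D" by auto
    then show "continuous_on (fst ` ((\<lambda>x. (x, G x)) ` D \<inter> (UNIV \<times> A))) (\<lambda>q. (q, G q))"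
      using continuous_on_subset[OF pl_mapD(2)[OF G]] by (intro continuous_intros) auto
  qed auto
  moreover have "{q\<in>D. G q \<in> A} = fst ` ((\<lambda>x. (x, G x)) ` D \<inter> (UNIV \<times> A))" by force
  ultimately show ?thesis by simp
qed

lemma pl_map_homeomorphism_inverse:
  fixes f :: "'a::euclidean_space \<Rightarrow> 'b::euclidean_space"
  assumes hom: "homeomorphism S T f g" and f: "pl_map S f"
  shows "pl_map T g"
proof -
  have "(\<lambda>y. (y, g y)) ` T = (\<lambda>(x, y). (y, x)) ` (\<lambda>x. (x, f x)) ` S"
    using hom unfolding homeomorphism_def by force
  also have "locally_polyhedral \<dots>"
    by (rule locally_polyhedral_linear_image[OF pl_mapD(3)[OF f], where R = "\<lambda>(y, x). (x, y)"])
       (auto simp: linear_iff case_prod_beta intro!: continuous_intros)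
  finally have graph: "locally_polyhedral ((\<lambda>y. (y, g y)) ` T)" .
  have cont: "continuous_on T g" using homeomorphism_cont2[OF hom] .
  have "locally_polyhedral (fst ` (\<lambda>y. (y, g y)) ` T)"
    using cont by (intro locally_polyhedral_linear_image[OF graph linear_fst, where R = "\<lambda>y. (y, g y)"])
      (auto simp: image_image intro!: continuous_intros)
  then show ?thesis using cont graph by (intro pl_mapI) (simp_all add: image_image)
qed

section \<open>A PL isotopy pushing the line to infinity\<close>

text \<open>Stage j of the push is switched on while t runs through [1 - 2^-j, 1 - 2^-(j+1)]:
  its threshold push_level drops from e to 0, and once it is on, the stage moves every s with
  |s| \<ge> e outwards by e.  Hence for t < 1 only finitely many stages act, and push e t is an odd
  PL homeomorphism of the line which, as t \<rightarrow> 1, pushes {s. |s| \<ge> e} off to infinity.\<close>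

definition push_level :: "real \<Rightarrow> nat \<Rightarrow> real \<Rightarrow> real" where
  "push_level e j t = e * max 0 (min 1 (2^(j+1) * (1 - t) - 1))"

definition push_step :: "real \<Rightarrow> nat \<Rightarrow> real \<Rightarrow> real \<Rightarrow> real" where
  "push_step e j t s = max 0 (min s e - push_level e j t) - max 0 (min (-s) e - push_level e j t)"

definition push :: "real \<Rightarrow> real \<Rightarrow> real \<Rightarrow> real" where
  "push e t s = s + (\<Sum>j. push_step e j t s)"

lemma push_level_eq_full:
  assumes "(1/2)^K < 1 - t" "K \<le> j"
  shows "push_level e j t = e"
proof -
  have "(2::real) \<le> 2^(j+1-K)" using assms(2) by (simp add: Suc_diff_le)
  also have "\<dots> = 2^(j+1) * (1/2)^K" using assms(2) by (simp add: power_diff power_one_over)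
  also have "\<dots> < 2^(j+1) * (1 - t)" using assms(1) by simp
  finally show ?thesis unfolding push_level_def by simp
qed

lemma push_level_eq_0:
  assumes "1 - t \<le> (1/2)^k" "j < k"
  shows "push_level e j t = 0"
proof -
  have "(2::real)^(j+1) * (1 - t) \<le> 2^(j+1) * (1/2)^k" using assms(1) by simp
  also have "\<dots> = 2^(j+1) / 2^k" by (simp add: power_one_over)
  also have "\<dots> \<le> 1" using power_increasing[of "j+1" k "2::real"] assms(2) by simp
  finally show ?thesis unfolding push_level_def by simp
qed

lemma push_level_at_0: "push_level e j 0 = e"
  using power_increasing[of 1 "j+1" "2::real"] by (simp add: push_level_def)

lemma push_level_nonneg: "0 \<le> e \<Longrightarrow> 0 \<le> push_level e j t"
  by (simp add: push_level_def)

lemma push_step_eq_0: "push_level e j t = e \<Longrightarrow> push_step e j t s = 0"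
  unfolding push_step_def by simp

lemma push_step_uminus: "push_step e j t (-s) = - push_step e j t s"
  unfolding push_step_def by simp

lemma push_step_mono: "s \<le> s' \<Longrightarrow> push_step e j t s \<le> push_step e j t s'"
  unfolding push_step_def by (auto simp: max_def min_def)

lemma push_step_nonneg: "0 \<le> s \<Longrightarrow> 0 \<le> push_level e j t \<Longrightarrow> 0 \<le> push_step e j t s"
  unfolding push_step_def by (auto simp: max_def min_def)

lemma push_step_eq_full: "push_level e j t = 0 \<Longrightarrow> 0 < e \<Longrightarrow> e \<le> s \<Longrightarrow> push_step e j t s = e"
  unfolding push_step_def by (auto simp: max_def min_def)

lemma push_eq_finite_sum:
  assumes "(1/2)^K < 1 - t"
  shows "push e t s = s + (\<Sum>j<K. push_step e j t s)"
proof -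
  have "(\<Sum>j. push_step e j t s) = (\<Sum>j<K. push_step e j t s)"
    by (rule suminf_finite) (auto intro!: push_step_eq_0 push_level_eq_full[OF assms])
  then show ?thesis unfolding push_def by simp
qed

lemma obtain_pow_half_less:
  assumes "t < 1"
  obtains K where "(1/2::real)^K < 1 - t"
  using real_arch_pow_inv[of "1 - t" "1/2"] assms by auto

lemma push_at_0: "push e 0 s = s"
  using push_eq_finite_sum[of 1 0 e s] by (simp add: push_step_eq_0 push_level_at_0)

lemma push_expanding:
  assumes "t < 1" "s \<le> s'"
  shows "s' - s \<le> push e t s' - push e t s"
proof -
  obtain K where K: "(1/2::real)^K < 1 - t" using obtain_pow_half_less[OF assms(1)] .
  have "(\<Sum>j<K. push_step e j t s) \<le> (\<Sum>j<K. push_step e j t s')"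
    by (intro sum_mono push_step_mono assms(2))
  then show ?thesis using push_eq_finite_sum[OF K] by simp
qed

lemma push_dist_le:
  assumes "t < 1"
  shows "\<bar>s - s'\<bar> \<le> \<bar>push e t s - push e t s'\<bar>"
  using push_expanding[OF assms, of s s' e] push_expanding[OF assms, of s' s e]
  by (cases "s \<le> s'") auto

lemma push_inj: "t < 1 \<Longrightarrow> push e t s = push e t s' \<Longrightarrow> s = s'"
  using push_dist_le[of t s s' e] by simp

lemma push_uminus:
  assumes "t < 1"
  shows "push e t (-s) = - push e t s"
proof -
  obtain K where K: "(1/2::real)^K < 1 - t" using obtain_pow_half_less[OF assms] .
  show ?thesis using push_eq_finite_sum[OF K] by (simp add: push_step_uminus sum_negf)
qed

lemma push_zero: "t < 1 \<Longrightarrow> push e t 0 = 0"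
  using push_uminus[of t e 0] by simp

lemma push_ge:
  assumes "t < 1" "0 \<le> s" "0 \<le> e"
  shows "s \<le> push e t s"
  using push_expanding[OF assms(1,2), of e] push_zero[OF assms(1)] by simp

lemma push_escape:
  assumes "t < 1" "1 - t \<le> (1/2)^k" "0 < e" "e \<le> s"
  shows "s + real k * e \<le> push e t s"
proof -
  obtain K0 where K0: "(1/2::real)^K0 < 1 - t" using obtain_pow_half_less[OF assms(1)] .
  define K where "K = max K0 k"
  have "(1/2::real)^K \<le> (1/2)^K0" unfolding K_def by (rule power_decreasing) auto
  with K0 have K: "(1/2::real)^K < 1 - t" by linarith
  have "(\<Sum>j<K. push_step e j t s) = (\<Sum>j<k. push_step e j t s) + (\<Sum>j\<in>{k..<K}. push_step e j t s)"
    unfolding K_def by (metis le0 max.cobounded2 sum.atLeastLessThan_concat lessThan_atLeast0)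
  moreover have "(\<Sum>j<k. push_step e j t s) = real k * e"
    using push_step_eq_full[OF push_level_eq_0[OF assms(2)] assms(3,4)] by simp
  moreover have "0 \<le> (\<Sum>j\<in>{k..<K}. push_step e j t s)"
    using assms(3,4) by (intro sum_nonneg push_step_nonneg push_level_nonneg) auto
  ultimately show ?thesis using push_eq_finite_sum[OF K] by simp
qed

lemma push_abs_escape:
  assumes "t < 1" "1 - t \<le> (1/2)^k" "0 < e" "e \<le> \<bar>s\<bar>"
  shows "real (k+1) * e \<le> \<bar>push e t s\<bar>"
proof (cases "0 \<le> s")
  case True
  then show ?thesis using push_escape[OF assms(1-3), of s] assms(4) by (simp add: algebra_simps)
next
  case False
  then have "- s + real k * e \<le> push e t (-s)" using assms(4) by (intro push_escape[OF assms(1-3)]) auto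
  then show ?thesis using False assms(4) push_uminus[OF assms(1)] by (simp add: algebra_simps)
qed

lemma pl_map_push_level: "pl_map UNIV (\<lambda>p::real \<times> real. push_level e j (fst p))"
proof -
  have "pl_map UNIV (\<lambda>p::real \<times> real. e * max 0 (min 1 ((-(2^(j+1))) * fst p + 0 * snd p + (2^(j+1) - 1))))"
    by (intro pl_map_linear_compose[where L = "\<lambda>x. e * x"] pl_map_max pl_map_min pl_map_const
        locally_polyhedral_UNIV pl_map_affine) (simp add: linear_iff algebra_simps)
  then show ?thesis by (rule pl_map_cong) (auto simp: push_level_def algebra_simps)
qed

lemma pl_map_push_step: "pl_map UNIV (\<lambda>p::real \<times> real. push_step e j (fst p) (snd p))"
proof -
  have "pl_map UNIV (\<lambda>p::real \<times> real. max 0 (min (0 * fst p + 1 * snd p + 0) e - push_level e j (fst p))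
         - max 0 (min (0 * fst p + (-1) * snd p + 0) e - push_level e j (fst p)))"
    by (intro pl_map_diff pl_map_max pl_map_min pl_map_const locally_polyhedral_UNIV pl_map_affine
        pl_map_push_level)
  then show ?thesis by (rule pl_map_cong) (auto simp: push_step_def)
qed

lemma pl_map_push: "pl_map ({0..<1} \<times> UNIV) (\<lambda>p. push e (fst p) (snd p))"
proof (rule pl_map_local[OF locally_polyhedral_strip])
  fix a :: "real \<times> real" assume "a \<in> {0..<1} \<times> UNIV"
  then have "fst a < 1" by auto
  then obtain K where K: "(1/2::real)^K < 1 - fst a" by (rule obtain_pow_half_less)
  define U where "U = {p::real \<times> real. fst p < 1 - (1/2)^K}"
  have "open U" unfolding U_def by (intro open_Collect_less continuous_intros)
  moreover have "a \<in> U" using K unfolding U_def by simp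
  moreover have "pl_map UNIV (\<lambda>p::real \<times> real. snd p + (\<Sum>j<K. push_step e j (fst p) (snd p)))"
    by (intro pl_map_add pl_map_sum pl_map_push_step pl_map_linear) (auto simp: linear_iff)
  moreover have "\<forall>p\<in>({0..<1} \<times> UNIV) \<inter> U.
      push e (fst p) (snd p) = snd p + (\<Sum>j<K. push_step e j (fst p) (snd p))"
    using push_eq_finite_sum unfolding U_def by force
  ultimately show "\<exists>U E g. open U \<and> a \<in> U \<and> pl_map E g \<and> ({0..<1} \<times> UNIV) \<inter> U \<subseteq> E \<and>
      (\<forall>x\<in>({0..<1} \<times> UNIV) \<inter> U. push e (fst x) (snd x) = g x)"
    by blast
qed

lemma continuous_on_push: "continuous_on ({0..<1} \<times> UNIV) (\<lambda>p. push e (fst p) (snd p))"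
  using pl_mapD(2)[OF pl_map_push] .

lemma push_surj:
  assumes "0 \<le> t" "t < 1" "0 \<le> e"
  shows "\<exists>s. push e t s = z"
proof -
  have "continuous_on A (\<lambda>s. push e (fst (t, s)) (snd (t, s)))" for A
    using assms(1,2) by (intro continuous_on_compose2[OF continuous_on_push] continuous_intros) auto
  then have cont: "continuous_on A (push e t)" for A by simp
  show ?thesis
  proof (cases "0 \<le> z")
    case True
    then have "push e t 0 \<le> z" "z \<le> push e t z" using push_zero[OF assms(2)] push_ge[OF assms(2) _ assms(3)] by auto
    then show ?thesis using IVT'[of "push e t" 0 z z] cont True by blast
  next
    case False
    then have "push e t z \<le> z" "z \<le> push e t 0"
      using push_ge[OF assms(2), of "-z" e] push_uminus[OF assms(2), of e z] push_zero[OF assms(2)] assms(3)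
      by auto
    then show ?thesis using IVT'[of "push e t" z z 0] cont False by force
  qed
qed

definition push_inv :: "real \<Rightarrow> real \<Rightarrow> real \<Rightarrow> real" where
  "push_inv e t z = (THE s. push e t s = z)"

lemma push_push_inv:
  assumes "0 \<le> t" "t < 1" "0 \<le> e"
  shows "push e t (push_inv e t z) = z"
proof -
  obtain s where s: "push e t s = z" using push_surj[OF assms] by blast
  then have "(THE s. push e t s = z) = s" using push_inj[OF assms(2)] by blast
  then show ?thesis unfolding push_inv_def using s by simp
qed

lemma push_inv_push:
  assumes "0 \<le> t" "t < 1" "0 \<le> e"
  shows "push_inv e t (push e t s) = s"
  using push_inj[OF assms(2) push_push_inv[OF assms]] .

lemma continuous_on_push_inv:
  assumes e: "0 \<le> e"
  shows "continuous_on ({0..<1} \<times> UNIV) (\<lambda>p. push_inv e (fst p) (snd p))"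
  unfolding continuous_on_iff
proof (intro ballI allI impI)
  fix p :: "real \<times> real" and \<epsilon> :: real assume p: "p \<in> {0..<1} \<times> UNIV" and "0 < \<epsilon>"
  obtain t0 z0 where p_eq: "p = (t0, z0)" by (cases p)
  define s0 where "s0 = push_inv e t0 z0"
  have t0: "0 \<le> t0" "t0 < 1" using p p_eq by auto
  have z0: "push e t0 s0 = z0" unfolding s0_def using push_push_inv[OF t0 e] .
  obtain \<delta> where \<delta>: "\<delta> > 0"
    "\<And>q. q \<in> {0..<1} \<times> UNIV \<Longrightarrow> dist q (t0, s0) < \<delta> \<Longrightarrow> dist (push e (fst q) (snd q)) z0 < \<epsilon>/2"
    using continuous_on_push[unfolded continuous_on_iff] t0 \<open>0 < \<epsilon>\<close> z0
    by (metis (no_types, lifting) SigmaI UNIV_I atLeastLessThan_iff fst_conv half_gt_zero snd_conv)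
  \<comment> \<open>push e t is expanding, so its inverse moves by at most |z - push e t s0|,
     which is small by continuity of push.\<close>
  show "\<exists>d>0. \<forall>q\<in>{0..<1} \<times> UNIV. dist q p < d \<longrightarrow>
          dist (push_inv e (fst q) (snd q)) (push_inv e (fst p) (snd p)) < \<epsilon>"
  proof (intro exI[of _ "min \<delta> (\<epsilon>/2)"] conjI ballI impI)
    fix q assume q: "q \<in> {0..<1} \<times> UNIV" "dist q p < min \<delta> (\<epsilon>/2)"
    obtain t z where q_eq: "q = (t, z)" by (cases q)
    have t: "0 \<le> t" "t < 1" using q q_eq by auto
    have "dist t t0 < \<delta>" "dist z z0 < \<epsilon>/2"
      using dist_fst_le[of q p] dist_snd_le[of q p] q(2) p_eq q_eq by auto
    then have "dist (t, s0) (t0, s0) < \<delta>" by (simp add: dist_Pair_Pair)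
    then have "\<bar>push e t s0 - z0\<bar> < \<epsilon>/2" using \<delta>(2)[of "(t, s0)"] t by (simp add: dist_real_def)
    have "\<bar>push_inv e t z - s0\<bar> \<le> \<bar>z - push e t s0\<bar>"
      using push_dist_le[OF t(2), of "push_inv e t z" s0 e] push_push_inv[OF t e] by simp
    also have "\<dots> < \<epsilon>" using \<open>dist z z0 < \<epsilon>/2\<close> \<open>\<bar>push e t s0 - z0\<bar> < \<epsilon>/2\<close>
      unfolding dist_real_def by arith
    finally show "dist (push_inv e (fst q) (snd q)) (push_inv e (fst p) (snd p)) < \<epsilon>"
      using p_eq q_eq by (simp add: s0_def dist_real_def)
  qed (use \<delta>(1) \<open>0 < \<epsilon>\<close> in auto)
qed

lemma pl_map_push_inv:
  assumes e: "0 \<le> e"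
  shows "pl_map ({0..<1} \<times> UNIV) (\<lambda>p. push_inv e (fst p) (snd p))"
proof -
  have "homeomorphism ({0..<1} \<times> UNIV) ({0..<1} \<times> UNIV)
          (\<lambda>p. (fst p, push e (fst p) (snd p))) (\<lambda>p. (fst p, push_inv e (fst p) (snd p)))"
    using continuous_on_push continuous_on_push_inv[OF e] push_push_inv[OF _ _ e] push_inv_push[OF _ _ e]
    by (intro homeomorphismI continuous_intros) auto
  moreover have "pl_map ({0..<1} \<times> UNIV) (\<lambda>p. (fst p, push e (fst p) (snd p)))"
    by (rule pl_map_Pair[OF pl_map_linear[OF locally_polyhedral_strip linear_fst] pl_map_push])
  ultimately have "pl_map ({0..<1} \<times> UNIV) (\<lambda>p. (fst p, push_inv e (fst p) (snd p)))"
    by (rule pl_map_homeomorphism_inverse)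
  from pl_map_linear_compose[OF this linear_snd] show ?thesis by simp
qed

definition push_vec :: "real \<Rightarrow> real \<Rightarrow> 'v::euclidean_space \<Rightarrow> 'v" where
  "push_vec e t y = (\<Sum>b\<in>Basis. push e t (y \<bullet> b) *\<^sub>R b)"

definition push_vec_inv :: "real \<Rightarrow> real \<Rightarrow> 'v::euclidean_space \<Rightarrow> 'v" where
  "push_vec_inv e t z = (\<Sum>b\<in>Basis. push_inv e t (z \<bullet> b) *\<^sub>R b)"

lemma inner_push_vec: "b \<in> Basis \<Longrightarrow> push_vec e t y \<bullet> b = push e t (y \<bullet> b)"
  unfolding push_vec_def by (simp add: inner_sum_left inner_Basis if_distrib[of "\<lambda>x. _ * x"] sum.delta cong: if_cong)

lemma inner_push_vec_inv: "b \<in> Basis \<Longrightarrow> push_vec_inv e t z \<bullet> b = push_inv e t (z \<bullet> b)"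
  unfolding push_vec_inv_def by (simp add: inner_sum_left inner_Basis if_distrib[of "\<lambda>x. _ * x"] sum.delta cong: if_cong)

lemma push_vec_inv_push_vec:
  assumes "0 \<le> t" "t < 1" "0 \<le> e"
  shows "push_vec_inv e t (push_vec e t y) = y"
  by (rule euclidean_eqI) (simp add: inner_push_vec_inv inner_push_vec push_inv_push[OF assms])

lemma push_vec_push_vec_inv:
  assumes "0 \<le> t" "t < 1" "0 \<le> e"
  shows "push_vec e t (push_vec_inv e t z) = z"
  by (rule euclidean_eqI) (simp add: inner_push_vec_inv inner_push_vec push_push_inv[OF assms])

lemma push_vec_at_0: "push_vec e 0 y = y"
  by (rule euclidean_eqI) (simp add: inner_push_vec push_at_0)

lemma push_vec_inv_at_0: "0 \<le> e \<Longrightarrow> push_vec_inv e 0 z = z"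
  using push_vec_inv_push_vec[of 0 e z] by (simp add: push_vec_at_0)

lemma push_vec_eq_0_iff:
  assumes "t < 1"
  shows "push_vec e t y = 0 \<longleftrightarrow> y = 0"
proof -
  have "push e t s = 0 \<longleftrightarrow> s = 0" for s
    using push_inj[OF assms, of e s 0] push_zero[OF assms] by auto
  then have "(\<forall>b\<in>Basis. push_vec e t y \<bullet> b = 0) \<longleftrightarrow> (\<forall>b\<in>Basis. y \<bullet> b = 0)"
    by (simp add: inner_push_vec)
  then show ?thesis by (simp add: euclidean_all_zero_iff)
qed

lemma push_vec_escape:
  assumes "t < 1" "1 - t \<le> (1/2)^k" "0 < e" "b \<in> Basis" "e \<le> \<bar>y \<bullet> b\<bar>"
  shows "real (k+1) * e \<le> norm (push_vec e t y)"
proof -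
  have "real (k+1) * e \<le> \<bar>push e t (y \<bullet> b)\<bar>" by (rule push_abs_escape[OF assms(1-3,5)])
  also have "\<dots> = \<bar>push_vec e t y \<bullet> b\<bar>" using inner_push_vec[OF assms(4)] by simp
  also have "\<dots> \<le> norm (push_vec e t y)" using Basis_le_norm[OF assms(4)] by simp
  finally show ?thesis .
qed

lemma pl_map_push_vec:
  "pl_map ({0..<1} \<times> (UNIV::'v::euclidean_space set)) (\<lambda>p. push_vec e (fst p) (snd p))"
  unfolding push_vec_def
  by (rule pl_map_coordinatewise[OF locally_polyhedral_halfopen_interval pl_map_push])

lemma pl_map_push_vec_inv:
  "0 \<le> e \<Longrightarrow> pl_map ({0..<1} \<times> (UNIV::'v::euclidean_space set)) (\<lambda>p. push_vec_inv e (fst p) (snd p))"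
  unfolding push_vec_inv_def
  by (rule pl_map_coordinatewise[OF locally_polyhedral_halfopen_interval pl_map_push_inv])

section \<open>PL submersions\<close>

definition submersion_chart ::
  "nat \<Rightarrow> ('e::euclidean_space \<Rightarrow> 'b::euclidean_space) \<Rightarrow> 'e set \<Rightarrow> 'b set \<Rightarrow> 'e
     \<Rightarrow> 'b set \<Rightarrow> 'c::euclidean_space set \<Rightarrow> ('b \<times> 'c \<Rightarrow> 'e) \<Rightarrow> ('e \<Rightarrow> 'b \<times> 'c) \<Rightarrow> bool" where
  "submersion_chart d \<pi> E B e V L h g \<longleftrightarrow>
     openin (top_of_set B) V \<and> \<pi> e \<in> V \<and> subspace L \<and> dim L = d \<and> pl_map (V \<times> L) h \<and>
     h ` (V \<times> L) \<subseteq> E \<inter> \<pi> -` V \<and> openin (top_of_set (E \<inter> \<pi> -` V)) (h ` (V \<times> L)) \<and>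
     homeomorphism (V \<times> L) (h ` (V \<times> L)) h g \<and> h (\<pi> e, 0) = e \<and> (\<forall>z\<in>V \<times> L. \<pi> (h z) = fst z)"

lemma pl_submersion_iff_charts:
  "pl_submersion d TYPE('c::euclidean_space) \<pi> E B \<longleftrightarrow>
     pl_map E \<pi> \<and> locally_polyhedral B \<and> \<pi> ` E \<subseteq> B \<and>
     (\<forall>e\<in>E. \<exists>V (L::'c set) h g. submersion_chart d \<pi> E B e V L h g)"
  unfolding pl_submersion_def submersion_chart_def ..

lemma pl_submersion_open_base:
  assumes sub: "pl_submersion d TYPE('c::euclidean_space) \<pi> E B"
    and B: "openin (top_of_set B') B" "locally_polyhedral B'"
  shows "pl_submersion d TYPE('c) \<pi> E B'"
  unfolding pl_submersion_iff_charts
proof (intro conjI ballI)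
  show "pl_map E \<pi>" "locally_polyhedral B'" "\<pi> ` E \<subseteq> B'"
    using sub openin_imp_subset[OF B(1)] B(2) unfolding pl_submersion_iff_charts by auto
  fix e assume "e \<in> E"
  then obtain V and L :: "'c set" and h g where chart: "submersion_chart d \<pi> E B e V L h g"
    using sub unfolding pl_submersion_iff_charts by blast
  then have "openin (top_of_set B') V"
    unfolding submersion_chart_def using B(1) by (blast intro: openin_trans)
  with chart have "submersion_chart d \<pi> E B' e V L h g" by (simp add: submersion_chart_def)
  then show "\<exists>V (L::'c set) h g. submersion_chart d \<pi> E B' e V L h g" by blast
qed

lemma submersion_chart_transport:
  assumes chart: "submersion_chart d \<pi> E B x V L h g"
    and hom: "homeomorphism E F \<Phi> \<Psi>" and pl: "pl_map E \<Phi>"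
    and proj: "\<And>x. x \<in> E \<Longrightarrow> \<pi>' (\<Phi> x) = \<pi> x"
  shows "submersion_chart d \<pi>' F B (\<Phi> x) V L (\<lambda>z. \<Phi> (h z)) (\<lambda>u. g (\<Psi> u))"
proof -
  have h: "openin (top_of_set B) V" "\<pi> x \<in> V" "subspace L" "dim L = d" "pl_map (V \<times> L) h"
      "h ` (V \<times> L) \<subseteq> E \<inter> \<pi> -` V" "openin (top_of_set (E \<inter> \<pi> -` V)) (h ` (V \<times> L))"
      "homeomorphism (V \<times> L) (h ` (V \<times> L)) h g" "h (\<pi> x, 0) = x" "\<forall>z\<in>V \<times> L. \<pi> (h z) = fst z"
    using chart unfolding submersion_chart_def by blast+
  have "(\<pi> x, 0) \<in> V \<times> L" using h(2) subspace_0[OF h(3)] by simp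
  then have "h (\<pi> x, 0) \<in> E" using h(6) by blast
  then have x: "x \<in> E" using h(9) by simp
  have \<Phi>: "\<Phi> ` E = F" and \<Psi>: "\<Psi> ` F = E" and inv: "\<And>y. y \<in> F \<Longrightarrow> \<Phi> (\<Psi> y) = y"
    using hom unfolding homeomorphism_def by blast+
  have \<Phi>_V: "\<Phi> ` (E \<inter> \<pi> -` V) = F \<inter> \<pi>' -` V"
  proof (intro equalityI subsetI)
    fix u assume "u \<in> \<Phi> ` (E \<inter> \<pi> -` V)"
    then show "u \<in> F \<inter> \<pi>' -` V" using \<Phi> proj by auto
  next
    fix u assume "u \<in> F \<inter> \<pi>' -` V"
    then have "\<Psi> u \<in> E \<inter> \<pi> -` V" "u = \<Phi> (\<Psi> u)" using \<Psi> proj[of "\<Psi> u"] inv by auto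
    then show "u \<in> \<Phi> ` (E \<inter> \<pi> -` V)" by (rule rev_image_eqI)
  qed
  then have hom_V: "homeomorphism (E \<inter> \<pi> -` V) (F \<inter> \<pi>' -` V) \<Phi> \<Psi>"
    by (rule homeomorphism_of_subsets[OF hom Int_lower1 order_refl])
  show ?thesis
    unfolding submersion_chart_def
  proof (intro conjI ballI)
    show "openin (top_of_set B) V" "\<pi>' (\<Phi> x) \<in> V" "subspace L" "dim L = d"
      using h(1-4) proj[OF x] by auto
    show "pl_map (V \<times> L) (\<lambda>z. \<Phi> (h z))" using h(6) by (intro pl_map_compose[OF h(5) pl]) blast
    show "(\<lambda>z. \<Phi> (h z)) ` (V \<times> L) \<subseteq> F \<inter> \<pi>' -` V"
      using image_mono[OF h(6), of \<Phi>] \<Phi>_V by (simp add: image_image)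
    show "openin (top_of_set (F \<inter> \<pi>' -` V)) ((\<lambda>z. \<Phi> (h z)) ` (V \<times> L))"
      using homeomorphism_imp_open_map[OF hom_V h(7)] by (simp add: image_image)
    show "homeomorphism (V \<times> L) ((\<lambda>z. \<Phi> (h z)) ` (V \<times> L)) (\<lambda>z. \<Phi> (h z)) (\<lambda>u. g (\<Psi> u))"
      using homeomorphism_compose[OF h(8) homeomorphism_of_subsets[OF hom_V h(6) order_refl refl]]
      by (simp add: o_def image_image)
    show "\<Phi> (h (\<pi>' (\<Phi> x), 0)) = \<Phi> x" using h(9) proj[OF x] by simp
    show "\<pi>' (\<Phi> (h z)) = fst z" if "z \<in> V \<times> L" for z
      using proj h(6,10) that by fastforce
  qed
qed

lemma pl_submersion_transport:
  fixes \<Phi> :: "'e::euclidean_space \<Rightarrow> 'f::euclidean_space"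
  assumes sub: "pl_submersion d TYPE('c::euclidean_space) \<pi> E B"
    and hom: "homeomorphism E F \<Phi> \<Psi>" and pl: "pl_map E \<Phi>" "pl_map F \<Psi>"
    and proj: "\<And>x. x \<in> E \<Longrightarrow> \<pi>' (\<Phi> x) = \<pi> x"
  shows "pl_submersion d TYPE('c) \<pi>' F B"
  unfolding pl_submersion_iff_charts
proof (intro conjI ballI)
  have \<Psi>: "\<Psi> ` F = E" and inv: "\<And>y. y \<in> F \<Longrightarrow> \<Phi> (\<Psi> y) = y"
    using hom unfolding homeomorphism_def by blast+
  have proj': "\<pi>' y = \<pi> (\<Psi> y)" if "y \<in> F" for y
    using proj[of "\<Psi> y"] inv that \<Psi> by auto
  have \<pi>: "pl_map E \<pi>" "locally_polyhedral B" "\<pi> ` E \<subseteq> B"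
    using sub unfolding pl_submersion_iff_charts by blast+
  show "pl_map F \<pi>'"
    by (rule pl_map_cong[OF pl_map_compose[OF pl(2) \<pi>(1)]]) (auto simp: \<Psi> proj')
  show "locally_polyhedral B" by (rule \<pi>(2))
  show "\<pi>' ` F \<subseteq> B" using \<pi>(3) \<Psi> proj' by auto
  fix y assume y: "y \<in> F"
  then have "\<Psi> y \<in> E" using \<Psi> by auto
  then obtain V and L :: "'c set" and h g where "submersion_chart d \<pi> E B (\<Psi> y) V L h g"
    using sub unfolding pl_submersion_iff_charts by blast
  from submersion_chart_transport[OF this hom pl(1) proj]
  have "submersion_chart d \<pi>' F B y V L (\<lambda>z. \<Phi> (h z)) (\<lambda>u. g (\<Psi> u))" by (simp only: inv[OF y])
  then show "\<exists>V (L::'c set) h g. submersion_chart d \<pi>' F B y V L h g" by blast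
qed

definition fibred_Times :: "'a set \<Rightarrow> ('b \<times> 'v) set \<Rightarrow> (('a \<times> 'b) \<times> 'v) set" where
  "fibred_Times T E = {((t, b), y). t \<in> T \<and> (b, y) \<in> E}"

lemma fibred_Times_eq_image:
  "fibred_Times T E = (\<lambda>p. ((fst p, fst (snd p)), snd (snd p))) ` (T \<times> E)"
proof (intro equalityI subsetI)
  fix q assume "q \<in> fibred_Times T E"
  then obtain t b y where "q = ((t, b), y)" "t \<in> T" "(b, y) \<in> E" by (auto simp: fibred_Times_def)
  then show "q \<in> (\<lambda>p. ((fst p, fst (snd p)), snd (snd p))) ` (T \<times> E)"
    by (intro rev_image_eqI[of "(t, b, y)"]) auto
qed (auto simp: fibred_Times_def)

lemma fibred_Times_Times: "fibred_Times T (V \<times> L) = (T \<times> V) \<times> L"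
  by (auto simp: fibred_Times_def)

lemma fibred_Times_mono: "A \<subseteq> B \<Longrightarrow> fibred_Times T A \<subseteq> fibred_Times T B"
  by (auto simp: fibred_Times_def)

lemma homeomorphism_fibred_Times:
  "homeomorphism (T \<times> E) (fibred_Times T E)
     (\<lambda>p. ((fst p, fst (snd p)), snd (snd p))) (\<lambda>q. (fst (fst q), snd (fst q), snd q))"
  unfolding fibred_Times_eq_image
proof (rule homeomorphismI)
  show "continuous_on (T \<times> E) (\<lambda>p. ((fst p, fst (snd p)), snd (snd p)))"
    "continuous_on ((\<lambda>p. ((fst p, fst (snd p)), snd (snd p))) ` (T \<times> E)) (\<lambda>q. (fst (fst q), snd (fst q), snd q))"
    by (intro continuous_intros)+
qed (auto simp: image_image)

lemma openin_fibred_Times: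
  assumes "openin (top_of_set E) A"
  shows "openin (top_of_set (fibred_Times T E)) (fibred_Times T A)"
proof -
  have "openin (top_of_set (T \<times> E)) (T \<times> A)" by (intro openin_Times openin_subtopology_self assms)
  from homeomorphism_imp_open_map[OF homeomorphism_fibred_Times this]
  show ?thesis by (simp add: fibred_Times_eq_image)
qed

lemma locally_polyhedral_fibred_Times:
  fixes T :: "'a::euclidean_space set" and E :: "('b::euclidean_space \<times> 'v::euclidean_space) set"
  assumes "locally_polyhedral T" "locally_polyhedral E"
  shows "locally_polyhedral (fibred_Times T E)"
  unfolding fibred_Times_eq_image using assms
  by (intro locally_polyhedral_linear_image[where R = "\<lambda>((t, b), y). (t, b, y)"])
     (auto simp: case_prod_beta linear_iff intro!: continuous_intros locally_polyhedral_Times)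

lemma homeomorphism_Times_left_id:
  assumes "homeomorphism S S' f g"
  shows "homeomorphism (T \<times> S) (T \<times> S') (\<lambda>p. (fst p, f (snd p))) (\<lambda>p. (fst p, g (snd p)))"
proof (rule homeomorphismI)
  show "continuous_on (T \<times> S) (\<lambda>p. (fst p, f (snd p)))"
    by (intro continuous_intros continuous_on_compose2[OF homeomorphism_cont1[OF assms]]) auto
  show "continuous_on (T \<times> S') (\<lambda>p. (fst p, g (snd p)))"
    by (intro continuous_intros continuous_on_compose2[OF homeomorphism_cont2[OF assms]]) auto
qed (use assms homeomorphism_apply1[OF assms] homeomorphism_apply2[OF assms] in
      \<open>auto simp: homeomorphism_def\<close>)

lemma homeomorphism_chart_Times:
  assumes "homeomorphism (V \<times> L) (h ` (V \<times> L)) h g"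
  shows "homeomorphism ((T \<times> V) \<times> L) (fibred_Times T (h ` (V \<times> L)))
           (\<lambda>z. ((fst (fst z), fst (h (snd (fst z), snd z))), snd (h (snd (fst z), snd z))))
           (\<lambda>u. ((fst (fst u), fst (g (snd (fst u), snd u))), snd (g (snd (fst u), snd u))))"
proof -
  have "homeomorphism ((T \<times> V) \<times> L) (T \<times> (V \<times> L))
      (\<lambda>q. (fst (fst q), snd (fst q), snd q)) (\<lambda>p. ((fst p, fst (snd p)), snd (snd p)))"
    using homeomorphism_symD[OF homeomorphism_fibred_Times[of T "V \<times> L"]] by (simp add: fibred_Times_Times)
  from homeomorphism_compose[OF homeomorphism_compose[OF this homeomorphism_Times_left_id[OF assms]]
      homeomorphism_fibred_Times]
  show ?thesis by (simp add: o_def)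
qed

lemma submersion_chart_fibred_Times:
  fixes E :: "('b::euclidean_space \<times> 'v::euclidean_space) set" and T :: "'a::euclidean_space set"
  assumes chart: "submersion_chart d fst E B (b, y) V L h g" and T: "locally_polyhedral T" "t \<in> T"
  shows "submersion_chart d fst (fibred_Times T E) (T \<times> B) ((t, b), y) (T \<times> V) L
           (\<lambda>z. ((fst (fst z), fst (h (snd (fst z), snd z))), snd (h (snd (fst z), snd z))))
           (\<lambda>u. ((fst (fst u), fst (g (snd (fst u), snd u))), snd (g (snd (fst u), snd u))))"
    (is "submersion_chart _ _ _ _ _ _ _ ?h ?g")
proof -
  have h: "openin (top_of_set B) V" "pl_map (V \<times> L) h" "h ` (V \<times> L) \<subseteq> E \<inter> fst -` V"
      "openin (top_of_set (E \<inter> fst -` V)) (h ` (V \<times> L))" "homeomorphism (V \<times> L) (h ` (V \<times> L)) h g"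
      "h (b, 0) = (b, y)" "\<forall>z\<in>V \<times> L. fst (h z) = fst z"
    using chart unfolding submersion_chart_def by simp_all
  have hom: "homeomorphism ((T \<times> V) \<times> L) (fibred_Times T (h ` (V \<times> L))) ?h ?g"
    by (rule homeomorphism_chart_Times[OF h(5)])
  then have img: "?h ` ((T \<times> V) \<times> L) = fibred_Times T (h ` (V \<times> L))"
    unfolding homeomorphism_def by blast
  have E_V: "fibred_Times T (E \<inter> fst -` V) = fibred_Times T E \<inter> fst -` (T \<times> V)"
    by (auto simp: fibred_Times_def)
  with openin_fibred_Times[OF h(4), of T]
  have "openin (top_of_set (fibred_Times T E \<inter> fst -` (T \<times> V))) (?h ` ((T \<times> V) \<times> L))"
    by (simp add: img)
  moreover have "pl_map ((T \<times> V) \<times> L) ?h"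
  proof -
    have TVL: "locally_polyhedral ((T \<times> V) \<times> L)"
      using T(1) pl_mapD(1)[OF h(2)] locally_polyhedral_fibred_Times by (fastforce simp: fibred_Times_Times)
    have "pl_map ((T \<times> V) \<times> L) (\<lambda>z. fst (fst z))"
      by (rule pl_map_linear[OF TVL]) (simp add: linear_iff)
    moreover have "pl_map ((T \<times> V) \<times> L) (\<lambda>z. h (snd (fst z), snd z))"
      by (rule pl_map_compose[OF pl_map_linear[OF TVL] h(2)]) (auto simp: linear_iff)
    ultimately have "pl_map ((T \<times> V) \<times> L) (\<lambda>z. (fst (fst z), h (snd (fst z), snd z)))"
      by (rule pl_map_Pair)
    from pl_map_linear_compose[OF this, of "\<lambda>p. ((fst p, fst (snd p)), snd (snd p))"]
    show ?thesis by (simp add: linear_iff)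
  qed
  moreover have "?h ` ((T \<times> V) \<times> L) \<subseteq> fibred_Times T E \<inter> fst -` (T \<times> V)"
    unfolding img E_V[symmetric] using h(3) by (rule fibred_Times_mono)
  moreover have "openin (top_of_set (T \<times> B)) (T \<times> V)"
    using h(1) by (intro openin_Times openin_subtopology_self)
  moreover have "fst (?h z) = fst z" if "z \<in> (T \<times> V) \<times> L" for z
    using h(7) that by (auto simp: prod_eq_iff)
  ultimately show ?thesis
    using hom[folded img] chart h(6) T(2) unfolding submersion_chart_def by auto
qed

lemma pl_submersion_fibred_Times:
  fixes E :: "('b::euclidean_space \<times> 'v::euclidean_space) set" and T :: "'a::euclidean_space set"
  assumes sub: "pl_submersion d TYPE('c::euclidean_space) fst E B" and T: "locally_polyhedral T"
  shows "pl_submersion d TYPE('c) fst (fibred_Times T E) (T \<times> B)"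
  unfolding pl_submersion_iff_charts
proof (intro conjI ballI)
  have E: "pl_map E fst" "locally_polyhedral B" "fst ` E \<subseteq> B"
    using sub unfolding pl_submersion_iff_charts by blast+
  show "pl_map (fibred_Times T E) fst"
    using T pl_mapD(1)[OF E(1)] by (intro pl_map_linear linear_fst locally_polyhedral_fibred_Times)
  show "locally_polyhedral (T \<times> B)" using T E(2) by (rule locally_polyhedral_Times)
  show "fst ` fibred_Times T E \<subseteq> T \<times> B" using E(3) by (force simp: fibred_Times_def)
  fix q assume "q \<in> fibred_Times T E"
  then obtain t b y where q: "q = ((t, b), y)" "t \<in> T" "(b, y) \<in> E" by (auto simp: fibred_Times_def)
  then obtain V and L :: "'c set" and h g where "submersion_chart d fst E B (b, y) V L h g"
    using sub unfolding pl_submersion_iff_charts by fastforce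
  from submersion_chart_fibred_Times[OF this T q(2)]
  show "\<exists>V (L::'c set) h g. submersion_chart d fst (fibred_Times T E) (T \<times> B) q V L h g"
    unfolding q(1) by blast
qed

section \<open>The concordance\<close>

lemma norm_bounded_below_off_zero_section:
  fixes W :: "('p::euclidean_space \<times> 'v::euclidean_space) set"
  assumes "compact P" "W \<subseteq> P \<times> UNIV" "closed W" "\<forall>x\<in>P. (x, 0) \<notin> W"
  obtains \<delta> where "\<delta> > 0" "\<And>x y. (x, y) \<in> W \<Longrightarrow> \<delta> \<le> norm y"
proof -
  define K where "K = W \<inter> (P \<times> cball (0::'v) 1)"
  have "compact K"
    unfolding K_def using assms(1,3) by (intro closed_Int_compact compact_Times compact_cball)
  have "\<exists>\<delta>>0. \<forall>p\<in>K. \<delta> \<le> norm (snd p)"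
  proof (cases "K = {}")
    case False
    have "continuous_on K (\<lambda>p. norm (snd p))" by (intro continuous_intros)
    then obtain p0 where p0: "p0 \<in> K" "\<forall>p\<in>K. norm (snd p0) \<le> norm (snd p)"
      using continuous_attains_inf[OF \<open>compact K\<close> False] by blast
    have "snd p0 \<noteq> 0" using p0(1) assms(4) unfolding K_def by (metis IntD1 IntD2 mem_Times_iff prod.collapse)
    then show ?thesis using p0 by (intro exI[of _ "norm (snd p0)"]) auto
  qed (intro exI[of _ 1], simp)
  then obtain \<delta> where \<delta>: "\<delta> > 0" "\<forall>p\<in>K. \<delta> \<le> norm (snd p)" by blast
  have "min \<delta> 1 \<le> norm y" if "(x, y) \<in> W" for x y
  proof (cases "norm y \<le> 1")
    case True
    then have "(x, y) \<in> K" using that assms(2) unfolding K_def by auto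
    then show ?thesis using \<delta>(2) by fastforce
  qed auto
  then show ?thesis using \<delta>(1) by (intro that[of "min \<delta> 1"]) auto
qed

definition avoids_cube :: "real \<Rightarrow> ('p \<times> 'v::euclidean_space) set \<Rightarrow> bool" where
  "avoids_cube e W \<longleftrightarrow> (\<forall>(x, y)\<in>W. \<exists>b\<in>Basis. e \<le> \<bar>y \<bullet> b\<bar>)"

lemma obtain_avoids_cube:
  fixes W :: "('p::euclidean_space \<times> 'v::euclidean_space) set"
  assumes "compact P" "W \<subseteq> P \<times> UNIV" "closed W" "\<forall>x\<in>P. (x, 0) \<notin> W"
  obtains e where "e > 0" "avoids_cube e W"
proof -
  obtain \<delta> where \<delta>: "\<delta> > 0" "\<And>x y. (x, y) \<in> W \<Longrightarrow> \<delta> \<le> norm y"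
    using norm_bounded_below_off_zero_section[OF assms] by blast
  define e where "e = \<delta> / DIM('v)"
  have "\<exists>b\<in>Basis. e \<le> \<bar>y \<bullet> b\<bar>" if "(x, y) \<in> W" for x y
  proof (rule ccontr)
    assume "\<not> (\<exists>b\<in>Basis. e \<le> \<bar>y \<bullet> b\<bar>)"
    then have "(\<Sum>b\<in>Basis. \<bar>y \<bullet> b\<bar>) < (\<Sum>b\<in>(Basis::'v set). e)"
      by (intro sum_strict_mono) auto
    then have "norm y < \<delta>" using norm_le_l1[of y] unfolding e_def by simp
    then show False using \<delta>(2)[OF that] by simp
  qed
  then show ?thesis using \<delta>(1) by (intro that[of e]) (auto simp: avoids_cube_def e_def)
qed

text \<open>The trace of W under the push, written as a preimage under push_vec_inv so that polyhedrality
  is a preimage argument.  Its fibre over (t, x) is push_vec e t ` W_x for t < 1 and empty for t = 1.\<close>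

definition push_trace :: "real \<Rightarrow> ('p \<times> 'v::euclidean_space) set \<Rightarrow> ((real \<times> 'p) \<times> 'v) set" where
  "push_trace e W = {((t, x), z). t \<in> {0..<1} \<and> (x, push_vec_inv e t z) \<in> W}"

definition push_marking :: "real \<Rightarrow> ('p \<Rightarrow> 'v option) \<Rightarrow> real \<times> 'p \<Rightarrow> 'v::euclidean_space option" where
  "push_marking e f = (\<lambda>(t, x). if t < 1 then map_option (push_vec e t) (f x) else None)"

lemma fibre_push_trace:
  assumes "0 \<le> e" "0 \<le> t" "t < 1"
  shows "fibre (push_trace e W) (t, x) = push_vec e t ` fibre W x"
proof -
  have "fibre (push_trace e W) (t, x) = {z. push_vec_inv e t z \<in> fibre W x}"
    using assms(2,3) by (simp add: fibre_def push_trace_def)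
  also have "\<dots> = push_vec e t ` fibre W x"
  proof (intro equalityI subsetI)
    fix z assume "z \<in> {z. push_vec_inv e t z \<in> fibre W x}"
    then show "z \<in> push_vec e t ` fibre W x"
      using push_vec_push_vec_inv[OF assms(2,3,1)] by (metis image_eqI mem_Collect_eq)
  qed (auto simp: push_vec_inv_push_vec[OF assms(2,3,1)])
  finally show ?thesis .
qed

lemma fibre_push_trace_outside: "t \<notin> {0..<1} \<Longrightarrow> fibre (push_trace e W) (t, x) = {}"
  by (auto simp: fibre_def push_trace_def)

lemma slice_push_trace_0: "0 \<le> e \<Longrightarrow> slice (push_trace e W) 0 = W"
  by (simp add: slice_def push_trace_def push_vec_inv_at_0)

lemma slice_push_trace_1: "slice (push_trace e W) 1 = {}"
  by (simp add: slice_def push_trace_def)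

lemma push_marking_0: "push_marking e f (0, x) = f x"
  by (cases "f x") (simp_all add: push_marking_def push_vec_at_0)

lemma push_marking_1: "push_marking e f (1, x) = None"
  by (simp add: push_marking_def)

lemma push_trace_escape:
  assumes "avoids_cube e W" "0 < e" "((t, x), z) \<in> push_trace e W" "1 - t \<le> (1/2)^k"
  shows "real (k+1) * e \<le> norm z"
proof -
  have t: "0 \<le> t" "t < 1" and W: "(x, push_vec_inv e t z) \<in> W"
    using assms(3) by (auto simp: push_trace_def)
  then obtain b where "b \<in> Basis" "e \<le> \<bar>push_vec_inv e t z \<bullet> b\<bar>"
    using assms(1) unfolding avoids_cube_def by fastforce
  from push_vec_escape[OF t(2) assms(4,2) this] show ?thesis
    by (simp add: push_vec_push_vec_inv[OF t less_imp_le[OF assms(2)]])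
qed

lemma push_trace_limit_time_less_1:
  assumes W: "avoids_cube e W" and e: "0 < e"
    and mem: "\<And>n. q n \<in> push_trace e W" and lim: "q \<longlonglongrightarrow> l"
  shows "fst (fst l) < 1"
proof (rule ccontr)
  assume "\<not> fst (fst l) < 1"
  obtain k :: nat where "(norm (snd l) + 1) / e < real k" using reals_Archimedean2 by blast
  then have k: "norm (snd l) + 1 < real (k+1) * e" using e by (simp add: field_simps)
  have "(0::real) < (1/2)^k" by simp
  then have "1 - (1/2)^k < fst (fst l)" using \<open>\<not> fst (fst l) < 1\<close> by linarith
  then have "\<forall>\<^sub>F n in sequentially. 1 - (1/2)^k < fst (fst (q n))"
    by (rule order_tendstoD(1)[OF tendsto_fst[OF tendsto_fst[OF lim]]])
  moreover have "\<forall>\<^sub>F n in sequentially. norm (snd (q n)) < norm (snd l) + 1"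
    using order_tendstoD(2)[OF tendsto_norm[OF tendsto_snd[OF lim]]] by auto
  ultimately obtain n where n: "1 - (1/2)^k < fst (fst (q n))" "norm (snd (q n)) < norm (snd l) + 1"
    using eventually_sequentially eventually_conj by (metis (no_types, lifting) le_refl)
  have "real (k+1) * e \<le> norm (snd (q n))"
    using push_trace_escape[OF W e, of "fst (fst (q n))" "snd (fst (q n))" "snd (q n)" k] mem[of n] n(1)
    by simp
  then show False using n(2) k by simp
qed

lemma closed_push_trace:
  fixes W :: "('p::euclidean_space \<times> 'v::euclidean_space) set"
  assumes W: "closed W" and e: "0 < e" "avoids_cube e W"
  shows "closed (push_trace e W)"
  unfolding closed_sequential_limits
proof (intro allI impI, elim conjE)
  fix q l assume mem: "\<forall>n. q n \<in> push_trace e W" and lim: "q \<longlonglongrightarrow> l"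
  obtain t x z where l: "l = ((t, x), z)" by (metis prod.collapse)
  have t1: "t < 1" using push_trace_limit_time_less_1[OF e(2,1) _ lim] mem l by auto
  have mem': "fst (fst (q n)) \<in> {0..<1}" "(snd (fst (q n)), push_vec_inv e (fst (fst (q n))) (snd (q n))) \<in> W"
    for n using mem[rule_format, of n] by (auto simp: push_trace_def case_prod_beta)
  have tl: "(\<lambda>n. fst (fst (q n))) \<longlonglongrightarrow> t" and xl: "(\<lambda>n. snd (fst (q n))) \<longlonglongrightarrow> x"
    and zl: "(\<lambda>n. snd (q n)) \<longlonglongrightarrow> z"
    using tendsto_fst[OF tendsto_fst[OF lim]] tendsto_snd[OF tendsto_fst[OF lim]] tendsto_snd[OF lim]
    unfolding l by simp_all
  have t0: "0 \<le> t" using mem' by (auto intro: LIMSEQ_le_const[OF tl])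
  have "(\<lambda>n. push_vec_inv e (fst (fst (fst (q n)), snd (q n))) (snd (fst (fst (q n)), snd (q n))))
        \<longlonglongrightarrow> push_vec_inv e (fst (t, z)) (snd (t, z))"
    using t0 t1 mem'
    by (intro continuous_on_tendsto_compose[OF pl_mapD(2)[OF pl_map_push_vec_inv] tendsto_Pair[OF tl zl]])
       (auto simp: less_imp_le[OF e(1)])
  then have "(\<lambda>n. (snd (fst (q n)), push_vec_inv e (fst (fst (q n))) (snd (q n)))) \<longlonglongrightarrow> (x, push_vec_inv e t z)"
    using xl by (intro tendsto_Pair) auto
  then have "(x, push_vec_inv e t z) \<in> W"
    by (rule closed_sequentially[OF W, rotated]) (use mem' in simp)
  then show "l \<in> push_trace e W" using t0 t1 unfolding l push_trace_def by simp
qed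

lemma pl_map_fibrewise:
  fixes F :: "real \<Rightarrow> 'v::euclidean_space \<Rightarrow> 'w::euclidean_space"
  assumes "pl_map ({0..<1} \<times> UNIV) (\<lambda>p. F (fst p) (snd p))"
  shows "pl_map (({0..<1} \<times> (UNIV::'p::euclidean_space set)) \<times> UNIV) (\<lambda>q. (fst q, F (fst (fst q)) (snd q)))"
proof -
  have D: "locally_polyhedral (({0..<1::real} \<times> (UNIV::'p set)) \<times> (UNIV::'v set))"
    by (intro locally_polyhedral_Times locally_polyhedral_halfopen_interval locally_polyhedral_UNIV)
  have "pl_map (({0..<1::real} \<times> (UNIV::'p set)) \<times> (UNIV::'v set)) (\<lambda>q. (fst (fst q), snd q))"
    by (rule pl_map_linear[OF D]) (simp add: linear_iff)
  then have "pl_map (({0..<1::real} \<times> (UNIV::'p set)) \<times> (UNIV::'v set))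
               (\<lambda>q. F (fst (fst (fst q), snd q)) (snd (fst (fst q), snd q)))"
    by (rule pl_map_compose[OF _ assms]) auto
  then show ?thesis using pl_map_Pair[OF pl_map_linear[OF D linear_fst]] by simp
qed

lemma locally_polyhedral_push_trace:
  fixes W :: "('p::euclidean_space \<times> 'v::euclidean_space) set"
  assumes "locally_polyhedral W" "0 \<le> e"
  shows "locally_polyhedral (push_trace e W)"
proof -
  have "pl_map (({0..<1} \<times> (UNIV::'p set)) \<times> UNIV)
          (\<lambda>q. (snd (fst q), push_vec_inv e (fst (fst q)) (snd q::'v)))"
    using pl_map_linear_compose[OF pl_map_fibrewise[OF pl_map_push_vec_inv[OF assms(2)]],
        of "\<lambda>q. (snd (fst q), snd q)"]
    by (simp add: linear_iff)
  from locally_polyhedral_pl_vimage[OF this assms(1)]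
  show ?thesis by (rule back_subst) (auto simp: push_trace_def)
qed

lemma openin_halfopen_interval_Times: "openin (top_of_set ({0..1::real} \<times> P)) ({0..<1} \<times> P)"
proof -
  have "openin (top_of_set {0..1::real}) ({0..1} \<inter> {..<1})" by (intro openin_open_Int) auto
  moreover have "{0..1::real} \<inter> {..<1} = {0..<1}" by auto
  ultimately show ?thesis by (intro openin_Times openin_subtopology_self) simp
qed

lemma pl_submersion_push_trace:
  fixes W :: "('p::euclidean_space \<times> 'v::euclidean_space) set"
  assumes sub: "pl_submersion d TYPE('c::euclidean_space) fst W P" and "0 \<le> e"
  shows "pl_submersion d TYPE('c) fst (push_trace e W) ({0..1} \<times> P)"
proof (rule pl_submersion_open_base)
  let ?E = "fibred_Times {0..<1::real} W"
  have E: "pl_submersion d TYPE('c) fst ?E ({0..<1} \<times> P)"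
    by (rule pl_submersion_fibred_Times[OF sub locally_polyhedral_halfopen_interval])
  define \<Phi> :: "(real \<times> 'p) \<times> 'v \<Rightarrow> (real \<times> 'p) \<times> 'v"
    where "\<Phi> = (\<lambda>q. (fst q, push_vec e (fst (fst q)) (snd q)))"
  define \<Psi> :: "(real \<times> 'p) \<times> 'v \<Rightarrow> (real \<times> 'p) \<times> 'v"
    where "\<Psi> = (\<lambda>q. (fst q, push_vec_inv e (fst (fst q)) (snd q)))"
  have W: "locally_polyhedral W" "locally_polyhedral ?E"
    using sub E unfolding pl_submersion_iff_charts by (blast dest: pl_mapD(1))+
  have pl_\<Phi>: "pl_map ?E \<Phi>" unfolding \<Phi>_def
    by (rule pl_map_subset[OF pl_map_fibrewise[OF pl_map_push_vec] W(2)]) (force simp: fibred_Times_def)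
  have pl_\<Psi>: "pl_map (push_trace e W) \<Psi>" unfolding \<Psi>_def
    by (rule pl_map_subset[OF pl_map_fibrewise[OF pl_map_push_vec_inv[OF assms(2)]]
          locally_polyhedral_push_trace[OF W(1) assms(2)]]) (force simp: push_trace_def)
  have inv: "\<Psi> (\<Phi> q) = q" if "q \<in> ?E" for q
    using that unfolding \<Phi>_def \<Psi>_def fibred_Times_def
    by (auto simp: push_vec_inv_push_vec[OF _ _ assms(2)])
  have inv': "\<Phi> (\<Psi> q) = q" if "q \<in> push_trace e W" for q
    using that unfolding \<Phi>_def \<Psi>_def push_trace_def
    by (auto simp: push_vec_push_vec_inv[OF _ _ assms(2)])
  have hom: "homeomorphism ?E (push_trace e W) \<Phi> \<Psi>"
  proof (rule homeomorphismI[OF pl_mapD(2)[OF pl_\<Phi>] pl_mapD(2)[OF pl_\<Psi>] _ _ inv inv'])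
    show "\<Phi> ` ?E \<subseteq> push_trace e W"
      unfolding \<Phi>_def push_trace_def fibred_Times_def
      by (auto simp: push_vec_inv_push_vec[OF _ _ assms(2)])
    show "\<Psi> ` push_trace e W \<subseteq> ?E"
      unfolding \<Psi>_def push_trace_def fibred_Times_def by auto
  qed
  show "pl_submersion d TYPE('c) fst (push_trace e W) ({0..<1} \<times> P)"
    by (rule pl_submersion_transport[OF E hom pl_\<Phi> pl_\<Psi>]) (simp add: \<Phi>_def)
  show "openin (top_of_set ({0..1::real} \<times> P)) ({0..<1} \<times> P)"
    by (rule openin_halfopen_interval_Times)
  show "locally_polyhedral ({0..1::real} \<times> P)"
    using sub unfolding pl_submersion_iff_charts
    by (simp add: locally_polyhedral_Times locally_polyhedral_interval)
qed

lemma Psi_push_trace: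
  fixes W :: "('p::euclidean_space \<times> 'v::euclidean_space) set"
  assumes "Psi d P W" "closed W" "0 < e" "avoids_cube e W"
  shows "Psi d ({0..1} \<times> P) (push_trace e W)"
  unfolding Psi_def
proof (intro conjI)
  have W: "W \<subseteq> P \<times> UNIV" "locally_polyhedral W" "pl_submersion d TYPE('v) fst W P"
    using assms(1) unfolding Psi_def by blast+
  show sub: "push_trace e W \<subseteq> ({0..1} \<times> P) \<times> UNIV"
    using W(1) by (auto simp: push_trace_def)
  show "closedin (top_of_set (({0..1} \<times> P) \<times> UNIV)) (push_trace e W)"
    by (rule closed_subset[OF sub closed_push_trace[OF assms(2-4)]])
  show "locally_polyhedral (push_trace e W)"
    using W(2) assms(3) by (simp add: locally_polyhedral_push_trace)
  show "pl_submersion d TYPE('v) fst (push_trace e W) ({0..1} \<times> P)"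
    using W(3) assms(3) by (simp add: pl_submersion_push_trace)
qed

lemma marking_SomeD:
  assumes "marking P W f" "x \<in> P" "f x = Some v"
  shows "(x, v) \<in> W"
proof -
  have "fibre W x \<noteq> {}" using assms unfolding marking_def by auto
  then obtain v' where "f x = Some v'" "v' \<in> fibre W x" using assms(1,2) unfolding marking_def by blast
  then show ?thesis using assms(3) by (simp add: fibre_def)
qed

lemma marking_oc_continuous: "marking P W f \<Longrightarrow> oc_continuous_on P f"
  unfolding marking_def by blast

lemma pl_map_push_marking:
  fixes f :: "'p::euclidean_space \<Rightarrow> 'v::euclidean_space option"
  assumes f: "pl_map {x\<in>P. f x \<noteq> None} (\<lambda>x. the (f x))"
  shows "pl_map {p \<in> {0..1} \<times> P. push_marking e f p \<noteq> None} (\<lambda>p. the (push_marking e f p))"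
proof -
  let ?Q = "{x\<in>P. f x \<noteq> None}"
  have D: "locally_polyhedral ({0..<1::real} \<times> ?Q)"
    using pl_mapD(1)[OF f] by (intro locally_polyhedral_Times locally_polyhedral_halfopen_interval)
  have "pl_map ({0..<1::real} \<times> ?Q) (\<lambda>p. the (f (snd p)))"
    by (rule pl_map_compose[OF pl_map_linear[OF D linear_snd] f]) auto
  then have "pl_map ({0..<1::real} \<times> ?Q) (\<lambda>p. (fst p, the (f (snd p))))"
    by (rule pl_map_Pair[OF pl_map_linear[OF D linear_fst]])
  then have "pl_map ({0..<1::real} \<times> ?Q)
      (\<lambda>p. push_vec e (fst (fst p, the (f (snd p)))) (snd (fst p, the (f (snd p)))))"
    by (rule pl_map_compose[OF _ pl_map_push_vec]) auto
  then show ?thesis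
    by (rule pl_map_cong) (auto simp: push_marking_def split: if_splits)
qed

context
  fixes e :: real and P :: "'p::euclidean_space set" and W :: "('p \<times> 'v::euclidean_space) set"
    and f :: "'p \<Rightarrow> 'v option"
  assumes e: "0 < e" and avoids: "avoids_cube e W" and mark: "marking P W f"
begin

lemma push_marking_continuous_at_end:
  assumes x: "x \<in> P" and U: "ocopen U" "None \<in> U"
  shows "\<exists>V. openin (top_of_set ({0..1} \<times> P)) V \<and> (1, x) \<in> V \<and> push_marking e f ` V \<subseteq> U"
proof -
  have "bounded (UNIV - Some -` U)" using U unfolding ocopen_def by (blast intro: compact_imp_bounded)
  then obtain R where R: "\<And>z. z \<notin> Some -` U \<Longrightarrow> norm z \<le> R" unfolding bounded_iff by blast
  obtain k :: nat where "R / e < real k" using reals_Archimedean2 by blast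
  then have k: "R < real (k+1) * e" using e by (simp add: field_simps)
  define V where "V = ({0..1} \<inter> {1 - (1/2::real)^k <..}) \<times> P"
  have "push_marking e f q \<in> U" if q: "q \<in> V" for q
  proof (cases "fst q < 1 \<and> f (snd q) \<noteq> None")
    case False
    then show ?thesis using U(2) by (auto simp: push_marking_def case_prod_beta)
  next
    case True
    then obtain w where w: "f (snd q) = Some w" and t: "fst q < 1" by auto
    have "(snd q, w) \<in> W" using marking_SomeD[OF mark _ w] q unfolding V_def by auto
    then have "((fst q, snd q), push_vec e (fst q) w) \<in> push_trace e W"
      using q t e unfolding V_def push_trace_def by (auto simp: push_vec_inv_push_vec)
    then have "real (k+1) * e \<le> norm (push_vec e (fst q) w)"
      by (rule push_trace_escape[OF avoids e]) (use q in \<open>auto simp: V_def\<close>)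
    then have "push_vec e (fst q) w \<in> Some -` U" using R k by force
    then show ?thesis using t w by (simp add: push_marking_def case_prod_beta)
  qed
  moreover have "openin (top_of_set ({0..1} \<times> P)) V"
    unfolding V_def by (intro openin_Times openin_open_Int openin_subtopology_self) auto
  moreover have "(1, x) \<in> V" using x by (simp add: V_def)
  ultimately show ?thesis by blast
qed

lemma push_marking_continuous_at_None:
  assumes x: "x \<in> P" and t: "0 \<le> t" "t < 1" and fx: "f x = None" and U: "ocopen U" "None \<in> U"
  shows "\<exists>V. openin (top_of_set ({0..1} \<times> P)) V \<and> (t, x) \<in> V \<and> push_marking e f ` V \<subseteq> U"
proof -
  define K where "K = UNIV - Some -` U"
  have "compact K" using U unfolding ocopen_def K_def by blast
  define T where "T = (1 + t) / 2"
  have T: "t < T" "T < 1" using t unfolding T_def by auto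
  \<comment> \<open>K2 collects the points that are pushed into K at some time in [0, T].\<close>
  define K2 where "K2 = (\<lambda>p. push_vec_inv e (fst p) (snd p)) ` ({0..T} \<times> K)"
  have "compact K2"
    unfolding K2_def using T e \<open>compact K\<close>
    by (intro compact_continuous_image continuous_on_subset[OF pl_mapD(2)[OF pl_map_push_vec_inv]]
        compact_Times compact_Icc) auto
  define U' where "U' = insert None (Some ` (- K2))"
  have "Some -` U' = - K2" unfolding U'_def by auto
  then have "ocopen U'"
    using \<open>compact K2\<close> unfolding ocopen_def by (auto simp: open_Compl compact_imp_closed)
  moreover have "f x \<in> U'" using fx unfolding U'_def by simp
  ultimately obtain Vx where Vx: "openin (top_of_set P) Vx" "x \<in> Vx" "f ` Vx \<subseteq> U'"
    using marking_oc_continuous[OF mark, unfolded oc_continuous_on_def, rule_format, OF x conjI] by blast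
  define V where "V = ({0..1} \<inter> {..<T}) \<times> Vx"
  have "push_marking e f q \<in> U" if q: "q \<in> V" for q
  proof (cases "f (snd q)")
    case None
    then show ?thesis using U(2) by (simp add: push_marking_def case_prod_beta)
  next
    case (Some w)
    have tq: "0 \<le> fst q" "fst q < 1" "fst q \<le> T" using q T unfolding V_def by auto
    have "w \<notin> K2" using q Vx(3) Some unfolding V_def U'_def by auto
    have "push_vec e (fst q) w \<notin> K"
    proof
      assume "push_vec e (fst q) w \<in> K"
      then have "(fst q, push_vec e (fst q) w) \<in> {0..T} \<times> K" using tq by simp
      then have "push_vec_inv e (fst q) (push_vec e (fst q) w) \<in> K2"
        unfolding K2_def by (rule rev_image_eqI) simp
      then show False using \<open>w \<notin> K2\<close> tq e by (simp add: push_vec_inv_push_vec)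
    qed
    then show ?thesis using Some tq unfolding K_def by (simp add: push_marking_def case_prod_beta)
  qed
  moreover have "openin (top_of_set ({0..1} \<times> P)) V"
    unfolding V_def by (intro openin_Times openin_open_Int Vx(1)) auto
  moreover have "(t, x) \<in> V" using t T Vx(2) by (simp add: V_def)
  ultimately show ?thesis by blast
qed

lemma push_marking_continuous_at_Some:
  assumes x: "x \<in> P" and t: "0 \<le> t" "t < 1" and fx: "f x = Some v"
    and U: "ocopen U" "push_marking e f (t, x) \<in> U"
  shows "\<exists>V. openin (top_of_set ({0..1} \<times> P)) V \<and> (t, x) \<in> V \<and> push_marking e f ` V \<subseteq> U"
proof -
  have "open (Some -` U)" using U(1) unfolding ocopen_def by blast
  from pl_mapD(2)[OF pl_map_push_vec, unfolded continuous_on_open_invariant, rule_format, OF this]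
  obtain G where G: "open G"
    "G \<inter> ({0..<1} \<times> UNIV) = (\<lambda>p. push_vec e (fst p) (snd p)) -` (Some -` U) \<inter> ({0..<1} \<times> UNIV)"
    by blast
  have "(t, v) \<in> G" using G(2) U(2) t fx by (auto simp: push_marking_def)
  then obtain A B where AB: "open A" "open B" "(t, v) \<in> A \<times> B" "A \<times> B \<subseteq> G"
    by (rule open_prod_elim[OF G(1)])
  have "ocopen (Some ` B)" using AB(2) unfolding ocopen_def by (simp add: inj_vimage_image_eq)
  moreover have "f x \<in> Some ` B" using AB(3) fx by simp
  ultimately obtain Vx where Vx: "openin (top_of_set P) Vx" "x \<in> Vx" "f ` Vx \<subseteq> Some ` B"
    using marking_oc_continuous[OF mark, unfolded oc_continuous_on_def, rule_format, OF x conjI] by blast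
  define V where "V = ({0..1} \<inter> (A \<inter> {..<1})) \<times> Vx"
  have "push_marking e f q \<in> U" if q: "q \<in> V" for q
  proof -
    obtain w where w: "f (snd q) = Some w" "w \<in> B" using q Vx(3) unfolding V_def by auto
    have "(fst q, w) \<in> G \<inter> ({0..<1} \<times> UNIV)" using q AB(4) w(2) unfolding V_def by auto
    then show ?thesis using G(2) q w(1) unfolding V_def by (auto simp: push_marking_def case_prod_beta)
  qed
  moreover have "openin (top_of_set ({0..1} \<times> P)) V"
    unfolding V_def using AB(1) by (intro openin_Times openin_open_Int Vx(1)) auto
  moreover have "(t, x) \<in> V" using t AB(3) Vx(2) by (simp add: V_def)
  ultimately show ?thesis by blast
qed

lemma oc_continuous_on_push_marking: "oc_continuous_on ({0..1} \<times> P) (push_marking e f)"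
  unfolding oc_continuous_on_def
proof (intro ballI allI impI, elim conjE)
  fix p U assume p: "p \<in> {0..1} \<times> P" and U: "ocopen U" "push_marking e f p \<in> U"
  obtain t x where tx: "p = (t, x)" "0 \<le> t" "t \<le> 1" "x \<in> P" using p by auto
  show "\<exists>V. openin (top_of_set ({0..1} \<times> P)) V \<and> p \<in> V \<and> push_marking e f ` V \<subseteq> U"
  proof (cases "t < 1")
    case False
    then show ?thesis
      using push_marking_continuous_at_end[OF tx(4) U(1)] U(2) tx by (simp add: push_marking_def)
  next
    case True
    show ?thesis
    proof (cases "f x")
      case None
      then have "None \<in> U" using U(2) tx True by (simp add: push_marking_def)
      then show ?thesis using push_marking_continuous_at_None[OF tx(4,2) True None U(1)] tx by simp
    next
      case (Some v)
      then show ?thesis using push_marking_continuous_at_Some[OF tx(4,2) True Some U(1)] U(2) tx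
        by simp
    qed
  qed
qed

lemma marking_push_marking: "marking ({0..1} \<times> P) (push_trace e W) (push_marking e f)"
  unfolding marking_def
proof (intro conjI ballI impI)
  show "oc_continuous_on ({0..1} \<times> P) (push_marking e f)" by (rule oc_continuous_on_push_marking)
  have mk: "\<And>x. x \<in> P \<Longrightarrow> f x = None \<longleftrightarrow> fibre W x = {}"
    "\<And>x. x \<in> P \<Longrightarrow> fibre W x \<noteq> {} \<Longrightarrow> \<exists>v. f x = Some v \<and> v \<in> fibre W x"
    "\<And>x. x \<in> P \<Longrightarrow> 0 \<in> fibre W x \<Longrightarrow> f x = Some 0"
    using mark unfolding marking_def by blast+
  have e0: "0 \<le> e" using e by simp
  fix p :: "real \<times> 'p" assume p: "p \<in> {0..1} \<times> P"
  then obtain t x where tx: "p = (t, x)" "0 \<le> t" "x \<in> P" by auto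
  have fib: "fibre (push_trace e W) p = (if t < 1 then push_vec e t ` fibre W x else {})"
    using fibre_push_trace[OF e0 tx(2), of W x] fibre_push_trace_outside[of t e W x] tx(1)
    by (cases "t < 1") simp_all
  show "push_marking e f p = None \<longleftrightarrow> fibre (push_trace e W) p = {}"
    using fib mk(1)[OF tx(3)] tx(1) by (simp add: push_marking_def)
  {
    assume "fibre (push_trace e W) p \<noteq> {}"
    then have t: "t < 1" "fibre W x \<noteq> {}" using fib by (simp_all split: if_splits)
    then obtain v where "f x = Some v" "v \<in> fibre W x" using mk(2)[OF tx(3)] by blast
    then show "\<exists>v. push_marking e f p = Some v \<and> v \<in> fibre (push_trace e W) p"
      using fib t(1) tx(1) by (auto simp: push_marking_def)
  }
  assume "0 \<in> fibre (push_trace e W) p"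
  then have t: "t < 1" and "0 \<in> push_vec e t ` fibre W x" using fib by (simp_all split: if_splits)
  then obtain y where "y \<in> fibre W x" "push_vec e t y = 0" by auto
  then have "0 \<in> fibre W x" by (simp add: push_vec_eq_0_iff[OF t])
  then show "push_marking e f p = Some 0"
    using mk(3)[OF tx(3)] t tx(1) by (simp add: push_marking_def push_vec_eq_0_iff[OF t])
next
  show "pl_map {p \<in> {0..1} \<times> P. push_marking e f p \<noteq> None} (\<lambda>p. the (push_marking e f p))"
    using mark unfolding marking_def by (blast intro: pl_map_push_marking)
qed

end

theorem corollary3p14:
  fixes d :: nat
    and P :: "'p::euclidean_space set"
    and W :: "('p \<times> 'v::euclidean_space) set"
    and f :: "'p \<Rightarrow> 'v option"
  assumes "compact P" and "locally_polyhedral P"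
    and "PsiT d P W f"
    and "zero_set P W = {}"
  shows "\<exists>Wh fh. concordance d P Wh fh W f {} (\<lambda>_. None) \<and>
           (\<forall>x\<in>P. fibre W x = {} \<longrightarrow> (\<forall>t\<in>{0..1}. fibre Wh (t, x) = {}))"
proof -
  have Psi: "Psi d P W" and mark: "marking P W f" using assms(3) unfolding PsiT_def by auto
  have W: "W \<subseteq> P \<times> UNIV" and W_closedin: "closedin (top_of_set (P \<times> UNIV)) W"
    using Psi unfolding Psi_def by auto
  from W_closedin have "closed W"
    by (rule closedin_closed_trans) (simp add: closed_Times compact_imp_closed[OF assms(1)])
  have "\<forall>x\<in>P. (x, 0) \<notin> W" using assms(4) unfolding zero_set_def fibre_def by auto
  then obtain e where e: "e > 0" "avoids_cube e W"
    using obtain_avoids_cube[OF assms(1) W \<open>closed W\<close>] by blast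
  have "concordance d P (push_trace e W) (push_marking e f) W f {} (\<lambda>_. None)"
    unfolding concordance_def PsiT_def
    using Psi_push_trace[OF Psi \<open>closed W\<close> e] marking_push_marking[OF e mark] e(1)
    by (simp add: slice_push_trace_0 slice_push_trace_1 push_marking_0 push_marking_1)
  moreover have "fibre (push_trace e W) (t, x) = {}" if "fibre W x = {}" for t x
    using fibre_push_trace[of e t W x] fibre_push_trace_outside[of t e W x] that e(1)
    by (cases "t \<in> {0..<1}") auto
  ultimately show ?thesis
    by (intro exI[of _ "push_trace e W"] exI[of _ "push_marking e f"] conjI) auto
qed

end
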